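(* Let $V\subseteq\mathcal V$ be finite and $\mathcal E,\mathcal F\in\mathit{DProg}(V)$. Then: (1) $\mathcal E\le_P^p\mathcal F$ if and only if $\mathrm{span}(\mathcal F)\subseteq\mathrm{span}(\mathcal E)$; (2) $\mathcal E\le_T^p\mathcal F$ if and only if $T_{\mathcal E}\sqsubseteq T_{\mathcal F}$ and $\mathrm{span}(\mathcal F\circ\mathcal P_{T_{\mathcal E}})\subseteq\mathrm{span}(\mathcal E\circ\mathcal P_{T_{\mathcal E}})$; (3) if both $\mathcal E$ and $\mathcal F$ are trace-preserving, then $\mathcal E\le_T^p\mathcal F$ iff $\mathcal E\le_P^p\mathcal F$.
   Context: $\mathcal V$ is a countably infinite set of quantum variables, each with state space $\mathbb C^2$; for finite $V\subseteq\mathcal V$, $\mathcal H_V=\bigotimes_{q\in V}\mathcal H_q$ with identity $I_V$. $\mathcal D(\mathcal H)$ denotes partial density operators (positive, trace $\le1$), $\mathcal S(\mathcal H)$ the projectors on $\mathcal H$, $\sqsubseteq$ the Löwner order; projectors are identified with their images (subspaces), so $P\sqsubseteq Q$ means subspace inclusion. $\mathit{DProg}(V)$ is the set of completely positive trace-nonincreasing super-operators on $\mathcal L(\mathcal H_V)$. Operators/super-operators on subsystems are implicitly extended to larger systems by tensoring with identities. For finite $W$ and $P,Q\in\mathcal S(\mathcal H_W)$: $\mathcal E\models_{tot}(P,Q)$ iff for every finite $X\supseteq V\cup W$ and $\rho\in\mathcal D(\mathcal H_X)$, ${\rm tr}(P\rho)\le{\rm tr}(Q\mathcal E(\rho))$;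 $\mathcal E\models_{par}(P,Q)$ iff for all such $X,\rho$, ${\rm tr}(P\rho)\le{\rm tr}(Q\mathcal E(\rho))+{\rm tr}(\rho)-{\rm tr}(\mathcal E(\rho))$. $\mathcal E\le_T^p\mathcal F$ iff for every finite $W$ and all $P,Q\in\mathcal S(\mathcal H_W)$, $\mathcal E\models_{tot}(P,Q)$ implies $\mathcal F\models_{tot}(P,Q)$; $\le_P^p$ likewise with $\models_{par}$. For a completely positive super-operator $\mathcal G$ with Kraus operators $\{G_i\}$ (i.e. $\mathcal G(A)=\sum_iG_iAG_i^\dagger$), $\mathrm{span}(\mathcal G)$ is the linear span of $\{G_i\}$ in $\mathcal L(\mathcal H_V)$ (independent of the Kraus representation). The termination space is $T_{\mathcal E}=\{|\psi\rangle\in\mathcal H_V:{\rm tr}(\mathcal E(|\psi\rangle\langle\psi|))={\rm tr}(|\psi\rangle\langle\psi|)\}$, a subspace identified with its projector, and $\mathcal P_{T_{\mathcal E}}$ is the super-operator $\rho\mapsto T_{\mathcal E}\rho T_{\mathcal E}$. *)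

theory Defs
  imports Complex_Main
begin

text \<open>Quantum variables are natural numbers (a countably infinite set), each with
state space C^2.  For a finite set X of variables, the computational basis of H_X is
indexed by the assignments X -> bool, represented as functions nat => bool that are
False outside X.  Operators on H_X are matrices indexed by such assignments; entries
outside the basis of X are irrelevant (junk).\<close>

type_synonym asgn = "nat \<Rightarrow> bool"
type_synonym qop = "asgn \<Rightarrow> asgn \<Rightarrow> complex"
type_synonym qvec = "asgn \<Rightarrow> complex"
type_synonym superop = "qop \<Rightarrow> qop"

definition asg :: "nat set \<Rightarrow> asgn set" where
  "asg X = {f. \<forall>q. q \<notin> X \<longrightarrow> \<not> f q}"

definition restr :: "nat set \<Rightarrow> asgn \<Rightarrow> asgn" where
  "restr W s = (\<lambda>q. q \<in> W \<and> s q)"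

definition merge :: "nat set \<Rightarrow> asgn \<Rightarrow> asgn \<Rightarrow> asgn" where
  "merge V a s = (\<lambda>q. if q \<in> V then a q else s q)"

definition clip :: "nat set \<Rightarrow> qop \<Rightarrow> qop" where
  "clip X A = (\<lambda>s t. if s \<in> asg X \<and> t \<in> asg X then A s t else 0)"

definition mmul :: "nat set \<Rightarrow> qop \<Rightarrow> qop \<Rightarrow> qop" where
  "mmul X A B = (\<lambda>s t. \<Sum>u\<in>asg X. A s u * B u t)"

definition adj :: "qop \<Rightarrow> qop" where
  "adj A = (\<lambda>s t. cnj (A t s))"

definition qtrace :: "nat set \<Rightarrow> qop \<Rightarrow> complex" where
  "qtrace X A = (\<Sum>s\<in>asg X. A s s)"

definition positive :: "nat set \<Rightarrow> qop \<Rightarrow> bool" where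
  "positive X A \<longleftrightarrow> (\<forall>\<psi>::qvec.
     let z = (\<Sum>s\<in>asg X. \<Sum>t\<in>asg X. cnj (\<psi> s) * A s t * \<psi> t) in Im z = 0 \<and> 0 \<le> Re z)"

definition density :: "nat set \<Rightarrow> qop \<Rightarrow> bool" where
  "density X \<rho> \<longleftrightarrow> positive X \<rho> \<and> Re (qtrace X \<rho>) \<le> 1"

definition projector :: "nat set \<Rightarrow> qop \<Rightarrow> bool" where
  "projector X P \<longleftrightarrow> (\<forall>s\<in>asg X. \<forall>t\<in>asg X. mmul X P P s t = P s t \<and> adj P s t = P s t)"

text \<open>A \<otimes> I_{X-W} for an operator A on H_W, W \<subseteq> X\<close>
definition ext_op :: "nat set \<Rightarrow> nat set \<Rightarrow> qop \<Rightarrow> qop" where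
  "ext_op W X A = (\<lambda>s t. A (restr W s) (restr W t) *
       (if \<forall>q\<in>X - W. s q = t q then 1 else 0))"

text \<open>E \<otimes> id_{X-V} for a super-operator E on L(H_V), V \<subseteq> X: E acts on each block\<close>
definition ext_so :: "nat set \<Rightarrow> superop \<Rightarrow> superop" where
  "ext_so V E = (\<lambda>\<rho> s t. E (\<lambda>a b. \<rho> (merge V a s) (merge V b t)) (restr V s) (restr V t))"

definition is_kraus :: "nat set \<Rightarrow> superop \<Rightarrow> qop list \<Rightarrow> bool" where
  "is_kraus V G Ks \<longleftrightarrow> (\<forall>A. \<forall>s\<in>asg V. \<forall>t\<in>asg V.
     G A s t = (\<Sum>K\<leftarrow>Ks. mmul V (mmul V K A) (adj K) s t))"

definition completely_positive :: "nat set \<Rightarrow> superop \<Rightarrow> bool" where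
  "completely_positive V G \<longleftrightarrow> (\<exists>Ks. is_kraus V G Ks)"

definition trace_nonincreasing :: "nat set \<Rightarrow> superop \<Rightarrow> bool" where
  "trace_nonincreasing V G \<longleftrightarrow>
     (\<forall>\<rho>. positive V \<rho> \<longrightarrow> Re (qtrace V (G \<rho>)) \<le> Re (qtrace V \<rho>))"

definition trace_preserving :: "nat set \<Rightarrow> superop \<Rightarrow> bool" where
  "trace_preserving V G \<longleftrightarrow> (\<forall>\<rho>. qtrace V (G \<rho>) = qtrace V \<rho>)"

definition DProg :: "nat set \<Rightarrow> superop set" where
  "DProg V = {G. completely_positive V G \<and> trace_nonincreasing V G}"

definition cspan :: "qop set \<Rightarrow> qop set" where
  "cspan S = {A. \<exists>F c. finite F \<and> F \<subseteq> S \<and> A = (\<lambda>s t. \<Sum>K\<in>F. c K * K s t)}"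

text \<open>span(G): span of the Kraus operators of G (independent of the chosen representation)\<close>
definition kraus_span :: "nat set \<Rightarrow> superop \<Rightarrow> qop set" where
  "kraus_span V G = cspan (clip V ` set (SOME Ks. is_kraus V G Ks))"

definition outer :: "qvec \<Rightarrow> qvec \<Rightarrow> qop" where
  "outer \<psi> \<phi> = (\<lambda>s t. \<psi> s * cnj (\<phi> t))"

definition vec_in :: "nat set \<Rightarrow> qvec \<Rightarrow> bool" where
  "vec_in V \<psi> \<longleftrightarrow> (\<forall>s. s \<notin> asg V \<longrightarrow> \<psi> s = 0)"

definition apply_op :: "nat set \<Rightarrow> qop \<Rightarrow> qvec \<Rightarrow> qvec" where
  "apply_op V P \<psi> = (\<lambda>s. \<Sum>t\<in>asg V. P s t * \<psi> t)"

definition term_space :: "nat set \<Rightarrow> superop \<Rightarrow> qvec set" where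
  "term_space V E = {\<psi>. vec_in V \<psi> \<and>
      qtrace V (E (outer \<psi> \<psi>)) = qtrace V (outer \<psi> \<psi>)}"

definition term_proj :: "nat set \<Rightarrow> superop \<Rightarrow> qop" where
  "term_proj V E = (THE P. P = clip V P \<and> projector V P \<and>
      {\<psi>. vec_in V \<psi> \<and> apply_op V P \<psi> = \<psi>} = term_space V E)"

definition proj_so :: "nat set \<Rightarrow> qop \<Rightarrow> superop" where
  "proj_so V P = (\<lambda>\<rho>. mmul V (mmul V P \<rho>) P)"

definition sat_tot :: "nat set \<Rightarrow> nat set \<Rightarrow> superop \<Rightarrow> qop \<Rightarrow> qop \<Rightarrow> bool" where
  "sat_tot V W E P Q \<longleftrightarrow> (\<forall>X \<rho>. finite X \<longrightarrow> V \<union> W \<subseteq> X \<longrightarrow> density X \<rho> \<longrightarrow>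
     Re (qtrace X (mmul X (ext_op W X P) \<rho>))
       \<le> Re (qtrace X (mmul X (ext_op W X Q) (ext_so V E \<rho>))))"

definition sat_par :: "nat set \<Rightarrow> nat set \<Rightarrow> superop \<Rightarrow> qop \<Rightarrow> qop \<Rightarrow> bool" where
  "sat_par V W E P Q \<longleftrightarrow> (\<forall>X \<rho>. finite X \<longrightarrow> V \<union> W \<subseteq> X \<longrightarrow> density X \<rho> \<longrightarrow>
     Re (qtrace X (mmul X (ext_op W X P) \<rho>))
       \<le> Re (qtrace X (mmul X (ext_op W X Q) (ext_so V E \<rho>)))
          + Re (qtrace X \<rho>) - Re (qtrace X (ext_so V E \<rho>)))"

definition le_T :: "nat set \<Rightarrow> superop \<Rightarrow> superop \<Rightarrow> bool" where
  "le_T V E F \<longleftrightarrow> (\<forall>W P Q. finite W \<longrightarrow> projector W P \<longrightarrow> projector W Q \<longrightarrow>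
      sat_tot V W E P Q \<longrightarrow> sat_tot V W F P Q)"

definition le_P :: "nat set \<Rightarrow> superop \<Rightarrow> superop \<Rightarrow> bool" where
  "le_P V E F \<longleftrightarrow> (\<forall>W P Q. finite W \<longrightarrow> projector W P \<longrightarrow> projector W Q \<longrightarrow>
      sat_par V W E P Q \<longrightarrow> sat_par V W F P Q)"

end

theory Submission
  imports Defs "HOL-Library.Function_Algebras" "HOL-Library.FuncSet"
begin

text \<open>For projectors \<open>A\<close>, \<open>B\<close> and a program \<open>G\<close> with Kraus operators \<open>K\<^sub>i\<close>, the triple
  \<open>{A} G {B}\<close> is partially correct iff every \<open>K\<^sub>i\<close> maps the range of \<open>A\<close> into that of \<open>B\<close>;
  it is totally correct iff moreover the defect \<open>I - \<Sum> K\<^sub>i\<^sup>\<dagger> K\<^sub>i\<close> vanishes on the range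
  of \<open>A\<close>, i.e. that range lies in the termination space.  Both conditions survive tensoring
  with an identity, and the first is linear in \<open>K\<^sub>i\<close>, so it passes from \<open>E\<close> to \<open>F\<close> when
  span \<open>F\<close> \<open>\<subseteq>\<close> span \<open>E\<close> (after compressing to \<open>T\<^sub>E\<close> for total correctness, where the
  defect of \<open>E\<close> forces the range of \<open>A\<close> into \<open>T\<^sub>E\<close>).  Conversely, if a Kraus operator
  \<open>L\<close> of \<open>F\<close> is not in span \<open>E\<close>, pick \<open>M\<close> Frobenius-orthogonal to span \<open>E\<close> but not to \<open>L\<close>.
  On \<open>V\<close> together with a copy of \<open>V\<close>, operators become vectors; with \<open>P\<close> the projector onto
  the vectorised \<open>I\<close> (or \<open>T\<^sub>E\<close>) and \<open>Q\<close> the complement of the projector onto the vectorised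
  \<open>M\<close>, the triple \<open>{P} \<cdot> {Q}\<close> holds for \<open>E\<close> but fails for \<open>F\<close>.  Trace-preserving programs
  have \<open>T\<^sub>E = I\<close>, so then the two orders coincide.\<close>

section \<open>Operators on a finite system\<close>

lemma finite_asg:
  assumes "finite X"
  shows "finite (asg X)"
proof -
  have "asg X \<subseteq> (\<lambda>S q. q \<in> S) ` Pow X"
  proof
    fix f assume "f \<in> asg X"
    hence "f = (\<lambda>q. q \<in> {q. f q})" "{q. f q} \<in> Pow X" by (auto simp: asg_def)
    thus "f \<in> (\<lambda>S q. q \<in> S) ` Pow X" by blast
  qed
  thus ?thesis using \<open>finite X\<close> by (meson finite_Pow_iff finite_imageI finite_subset)
qed

definition op_on :: "nat set \<Rightarrow> qop \<Rightarrow> bool" where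
  "op_on X A \<longleftrightarrow> (\<forall>s t. s \<notin> asg X \<or> t \<notin> asg X \<longrightarrow> A s t = 0)"

definition idop :: "nat set \<Rightarrow> qop" where
  "idop X = clip X (\<lambda>s t. if s = t then 1 else 0)"

lemma sum_list_map_apply: "sum_list (map f xs) s = sum_list (map (\<lambda>x. f x s) xs)"
  by (induction xs) auto

lemma sum_map_apply: "sum f S s = sum (\<lambda>x. f x s) S"
  by (induction S rule: infinite_finite_induct) auto

lemma sum_sum_list_swap: "(\<Sum>u\<in>S. \<Sum>x\<leftarrow>xs. f x u) = (\<Sum>x\<leftarrow>xs. \<Sum>u\<in>S. f x u)"
  by (induction xs) (simp_all add: sum.distrib)

lemma Re_sum_list: "Re (sum_list (map f xs)) = sum_list (map (\<lambda>x. Re (f x)) xs)"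
  by (induction xs) auto

lemma op_on_clip [simp]: "op_on X (clip X A)"
  by (auto simp: op_on_def clip_def)

lemma clip_op_on: "op_on X A \<Longrightarrow> clip X A = A"
  by (auto simp: op_on_def clip_def fun_eq_iff)

lemma op_on_idop [simp]: "op_on X (idop X)"
  by (simp add: idop_def)

lemma op_on_mmul [simp]: "op_on X A \<Longrightarrow> op_on X B \<Longrightarrow> op_on X (mmul X A B)"
  by (auto simp: op_on_def mmul_def)

lemma op_on_adj [simp]: "op_on X A \<Longrightarrow> op_on X (adj A)"
  by (auto simp: op_on_def adj_def)

lemma op_on_diff [simp]: "op_on X A \<Longrightarrow> op_on X B \<Longrightarrow> op_on X (A - B)"
  by (auto simp: op_on_def)

lemma op_on_sum_list [simp]: "(\<And>x. x \<in> set xs \<Longrightarrow> op_on X (f x)) \<Longrightarrow> op_on X (sum_list (map f xs))"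
  by (induction xs) (auto simp: op_on_def)

lemma mmul_clip_left: "mmul X (clip X A) B s t = (if s \<in> asg X then mmul X A B s t else 0)"
  by (auto simp: mmul_def clip_def intro!: sum.cong)

lemma mmul_clip_right: "mmul X A (clip X B) s t = (if t \<in> asg X then mmul X A B s t else 0)"
  by (auto simp: mmul_def clip_def intro!: sum.cong)

lemma clip_mmul: "clip X (mmul X A B) = mmul X (clip X A) (clip X B)"
proof (intro ext)
  fix s t
  show "clip X (mmul X A B) s t = mmul X (clip X A) (clip X B) s t"
    by (subst mmul_clip_left, subst mmul_clip_right) (simp add: clip_def)
qed

lemma mmul_assoc: "mmul X (mmul X A B) C = mmul X A (mmul X B C)"
proof (intro ext)
  fix s t
  have "mmul X (mmul X A B) C s t = (\<Sum>u\<in>asg X. \<Sum>w\<in>asg X. A s w * B w u * C u t)"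
    by (simp add: mmul_def sum_distrib_right)
  also have "\<dots> = (\<Sum>w\<in>asg X. \<Sum>u\<in>asg X. A s w * B w u * C u t)"
    by (rule sum.swap)
  also have "\<dots> = mmul X A (mmul X B C) s t"
    by (simp add: mmul_def sum_distrib_left mult.assoc)
  finally show "mmul X (mmul X A B) C s t = mmul X A (mmul X B C) s t" .
qed

lemma adj_mmul: "adj (mmul X A B) = mmul X (adj B) (adj A)"
  by (simp add: fun_eq_iff mmul_def adj_def mult.commute)

lemma adj_adj [simp]: "adj (adj A) = A"
  by (simp add: adj_def)

lemma qtrace_mmul_commute: "qtrace X (mmul X A B) = qtrace X (mmul X B A)"
proof -
  have "qtrace X (mmul X A B) = (\<Sum>s\<in>asg X. \<Sum>u\<in>asg X. A s u * B u s)"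
    by (simp add: qtrace_def mmul_def)
  also have "\<dots> = (\<Sum>u\<in>asg X. \<Sum>s\<in>asg X. A s u * B u s)"
    by (rule sum.swap)
  also have "\<dots> = qtrace X (mmul X B A)"
    by (simp add: qtrace_def mmul_def mult.commute)
  finally show ?thesis .
qed

lemma sum_asg_delta:
  "finite X \<Longrightarrow> s \<in> asg X \<Longrightarrow> (\<Sum>u\<in>asg X. if u = s then f u else 0) = f s"
  by (simp add: sum.delta' finite_asg)

lemma mmul_idop_left_at:
  assumes "finite X" and "s \<in> asg X"
  shows "mmul X (idop X) A s t = A s t"
proof -
  have "mmul X (idop X) A s t = (\<Sum>u\<in>asg X. if u = s then A u t else 0)"
    unfolding mmul_def idop_def clip_def using assms(2) by (intro sum.cong) auto
  thus ?thesis using assms by (simp add: sum_asg_delta)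
qed

lemma mmul_idop_right_at:
  assumes "finite X" and "t \<in> asg X"
  shows "mmul X A (idop X) s t = A s t"
proof -
  have "mmul X A (idop X) s t = (\<Sum>u\<in>asg X. if u = t then A s u else 0)"
    unfolding mmul_def idop_def clip_def using assms(2) by (intro sum.cong) auto
  thus ?thesis using assms by (simp add: sum_asg_delta)
qed

lemma mmul_idop_left:
  assumes "finite X" and "op_on X A"
  shows "mmul X (idop X) A = A"
proof (intro ext)
  fix s t
  show "mmul X (idop X) A s t = A s t"
  proof (cases "s \<in> asg X")
    case True
    thus ?thesis using assms by (simp add: mmul_idop_left_at)
  next
    case False
    thus ?thesis using assms by (simp add: op_on_def mmul_def idop_def clip_def)
  qed
qed

lemma mmul_idop_right:
  assumes "finite X" and "op_on X A"
  shows "mmul X A (idop X) = A"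
proof (intro ext)
  fix s t
  show "mmul X A (idop X) s t = A s t"
  proof (cases "t \<in> asg X")
    case True
    thus ?thesis using assms by (simp add: mmul_idop_right_at)
  next
    case False
    thus ?thesis using assms by (simp add: op_on_def mmul_def idop_def clip_def)
  qed
qed

lemma adj_idop [simp]: "adj (idop X) = idop X"
  by (auto simp: adj_def idop_def clip_def fun_eq_iff)

lemma mmul_diff_left: "mmul X (A - B) C = mmul X A C - mmul X B C"
  by (simp add: fun_eq_iff mmul_def algebra_simps sum_subtractf)

lemma mmul_diff_right: "mmul X A (B - C) = mmul X A B - mmul X A C"
  by (simp add: fun_eq_iff mmul_def algebra_simps sum_subtractf)

lemma mmul_add_left: "mmul X (A + B) C = mmul X A C + mmul X B C"
  by (simp add: fun_eq_iff mmul_def algebra_simps sum.distrib)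

lemma mmul_add_right: "mmul X A (B + C) = mmul X A B + mmul X A C"
  by (simp add: fun_eq_iff mmul_def algebra_simps sum.distrib)

lemma mmul_zero_left [simp]: "mmul X 0 C = 0"
  by (simp add: fun_eq_iff mmul_def)

lemma mmul_zero_right [simp]: "mmul X C 0 = 0"
  by (simp add: fun_eq_iff mmul_def)

lemma mmul_scale_left: "mmul X (\<lambda>s t. c * Y s t) Z = (\<lambda>s t. c * mmul X Y Z s t)"
  by (simp add: fun_eq_iff mmul_def sum_distrib_left mult_ac)

lemma mmul_scale_right: "mmul X Y (\<lambda>s t. c * Z s t) = (\<lambda>s t. c * mmul X Y Z s t)"
  by (simp add: fun_eq_iff mmul_def sum_distrib_left mult_ac)

lemma mmul_sum_list_left: "mmul X (sum_list (map f xs)) C = sum_list (map (\<lambda>x. mmul X (f x) C) xs)"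
  by (simp add: fun_eq_iff mmul_def sum_list_map_apply sum_list_mult_const[symmetric] sum_sum_list_swap)

lemma mmul_sum_list_right: "mmul X C (sum_list (map f xs)) = sum_list (map (\<lambda>x. mmul X C (f x)) xs)"
  by (simp add: fun_eq_iff mmul_def sum_list_map_apply sum_list_const_mult[symmetric] sum_sum_list_swap)

lemma adj_diff: "adj (A - B) = adj A - adj B"
  by (simp add: fun_eq_iff adj_def)

lemma adj_sum_list: "adj (sum_list (map f xs)) = sum_list (map (\<lambda>x. adj (f x)) xs)"
  by (simp add: fun_eq_iff adj_def sum_list_map_apply) (induction xs, auto)

lemma qtrace_add: "qtrace X (A + B) = qtrace X A + qtrace X B"
  by (simp add: qtrace_def sum.distrib)

lemma qtrace_diff: "qtrace X (A - B) = qtrace X A - qtrace X B"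
  by (simp add: qtrace_def sum_subtractf)

lemma qtrace_sum_list: "qtrace X (sum_list (map f xs)) = sum_list (map (\<lambda>x. qtrace X (f x)) xs)"
  by (induction xs) (auto simp: qtrace_def sum.distrib)

lemma qtrace_clip: "qtrace X (clip X A) = qtrace X A"
  by (simp add: qtrace_def clip_def)

lemma qtrace_mmul_clip_left: "qtrace X (mmul X (clip X B) Y) = qtrace X (mmul X B Y)"
  by (simp add: qtrace_def mmul_clip_left)

lemma qtrace_mmul_clip_right: "qtrace X (mmul X B (clip X Y)) = qtrace X (mmul X B Y)"
  by (simp add: qtrace_def mmul_clip_right)

lemma qtrace_mmul_idop: "finite X \<Longrightarrow> qtrace X (mmul X (idop X) Y) = qtrace X Y"
  by (simp add: qtrace_def mmul_idop_left_at)

lemma clip_sum_list: "clip X (sum_list (map f xs)) = sum_list (map (\<lambda>x. clip X (f x)) xs)"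
proof (intro ext)
  fix s t
  show "clip X (sum_list (map f xs)) s t = sum_list (map (\<lambda>x. clip X (f x)) xs) s t"
  proof (cases "s \<in> asg X \<and> t \<in> asg X")
    case True
    thus ?thesis by (simp add: clip_def sum_list_map_apply)
  next
    case False
    hence z: "(\<lambda>x. clip X (f x) s t) = (\<lambda>x. 0)" by (auto simp: clip_def)
    have "sum_list (map (\<lambda>x. clip X (f x)) xs) s t = 0"
      by (simp only: sum_list_map_apply z) simp
    moreover have "clip X (sum_list (map f xs)) s t = 0" using False by (auto simp: clip_def)
    ultimately show ?thesis by simp
  qed
qed

text \<open>Unlike \<open>projector\<close>, \<open>is_proj\<close> also requires the junk entries to vanish, which makes
  it stable under the matrix algebra of this section.\<close>

definition is_proj :: "nat set \<Rightarrow> qop \<Rightarrow> bool" where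
  "is_proj X P \<longleftrightarrow> op_on X P \<and> mmul X P P = P \<and> adj P = P"

lemma is_proj_clip:
  assumes p: "projector X P"
  shows "is_proj X (clip X P)"
proof -
  have "mmul X (clip X P) (clip X P) = clip X (mmul X P P)" by (simp add: clip_mmul)
  also have "\<dots> = clip X P" using p by (auto simp: clip_def projector_def fun_eq_iff)
  moreover have "adj (clip X P) = clip X P" using p
    by (auto simp: clip_def projector_def fun_eq_iff adj_def)
  ultimately show ?thesis by (simp add: is_proj_def)
qed

lemma proj_mmul_idem: "is_proj X P \<Longrightarrow> mmul X P (mmul X P Y) = mmul X P Y"
  by (simp add: is_proj_def flip: mmul_assoc)

lemma is_proj_projector: "is_proj X P \<Longrightarrow> projector X P"
  by (simp add: is_proj_def projector_def)

lemma is_proj_compl: "finite X \<Longrightarrow> is_proj X P \<Longrightarrow> is_proj X (idop X - P)"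
  unfolding is_proj_def
  by (auto simp: mmul_diff_left mmul_diff_right mmul_idop_left mmul_idop_right adj_diff)

lemma is_proj_idop: "finite X \<Longrightarrow> is_proj X (idop X)"
  by (simp add: is_proj_def mmul_idop_left)

section \<open>Vectors, positivity and pure states\<close>

definition qinner :: "nat set \<Rightarrow> qvec \<Rightarrow> qvec \<Rightarrow> complex" where
  "qinner X x y = (\<Sum>s\<in>asg X. cnj (x s) * y s)"

lemma qinner_adj: "qinner X x (apply_op X A y) = qinner X (apply_op X (adj A) x) y"
proof -
  have "qinner X x (apply_op X A y) = (\<Sum>s\<in>asg X. \<Sum>t\<in>asg X. cnj (x s) * A s t * y t)"
    by (simp add: qinner_def apply_op_def sum_distrib_left mult.assoc)
  also have "\<dots> = (\<Sum>t\<in>asg X. \<Sum>s\<in>asg X. cnj (x s) * A s t * y t)" by (rule sum.swap)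
  also have "\<dots> = qinner X (apply_op X (adj A) x) y"
    unfolding qinner_def apply_op_def adj_def
    by (auto simp: sum_distrib_right sum_distrib_left intro!: sum.cong simp: ac_simps)
  finally show ?thesis .
qed

lemma qinner_adj': "qinner X x (apply_op X (adj A) y) = qinner X (apply_op X A x) y"
  using qinner_adj[of X x "adj A" y] by simp

lemma apply_mmul: "apply_op X (mmul X A B) y = apply_op X A (apply_op X B y)"
proof (rule ext)
  fix s
  have "apply_op X (mmul X A B) y s = (\<Sum>t\<in>asg X. \<Sum>u\<in>asg X. A s u * B u t * y t)"
    by (simp add: mmul_def apply_op_def sum_distrib_right)
  also have "\<dots> = (\<Sum>u\<in>asg X. \<Sum>t\<in>asg X. A s u * B u t * y t)" by (rule sum.swap)
  also have "\<dots> = apply_op X A (apply_op X B y) s"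
    by (simp add: apply_op_def sum_distrib_left mult.assoc)
  finally show "apply_op X (mmul X A B) y s = apply_op X A (apply_op X B y) s" .
qed

lemma apply_add: "apply_op X A (x + y) = apply_op X A x + apply_op X A y"
  by (simp add: fun_eq_iff apply_op_def sum.distrib algebra_simps)

lemma apply_scale: "apply_op X A (\<lambda>s. c * y s) = (\<lambda>s. c * apply_op X A y s)"
  by (simp add: fun_eq_iff apply_op_def sum_distrib_left algebra_simps)

lemma apply_diff: "apply_op X (A - B) y = apply_op X A y - apply_op X B y"
  by (simp add: fun_eq_iff apply_op_def sum_subtractf algebra_simps)

lemma apply_sum_list: "apply_op X (sum_list (map f xs)) y = sum_list (map (\<lambda>x. apply_op X (f x) y) xs)"
  by (simp add: fun_eq_iff apply_op_def sum_list_map_apply sum_list_mult_const[symmetric] sum_sum_list_swap)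

lemma apply_idop: "finite X \<Longrightarrow> s \<in> asg X \<Longrightarrow> apply_op X (idop X) y s = y s"
  using mmul_idop_left_at[of X s "\<lambda>u t. y u"] by (simp add: mmul_def apply_op_def)

lemma apply_idop_vec_in:
  assumes "finite X" and "vec_in X \<psi>"
  shows "apply_op X (idop X) \<psi> = \<psi>"
proof (rule ext)
  fix s
  show "apply_op X (idop X) \<psi> s = \<psi> s"
    using assms apply_idop[OF assms(1)]
    by (cases "s \<in> asg X") (auto simp: apply_op_def idop_def clip_def vec_in_def)
qed

lemma vec_in_apply: "op_on V P \<Longrightarrow> vec_in V (apply_op V P \<psi>)"
  by (auto simp: vec_in_def apply_op_def op_on_def)

lemma cnj_mult_self: "cnj z * z = complex_of_real ((cmod z)\<^sup>2)"
  by (metis complex_norm_square mult.commute of_real_power)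

lemma qinner_self: "qinner X x x = complex_of_real (\<Sum>s\<in>asg X. (cmod (x s))\<^sup>2)"
  by (simp add: qinner_def cnj_mult_self)

lemma Im_qinner_self [simp]: "Im (qinner X x x) = 0"
  by (simp add: qinner_self)

lemma qinner_self_nonneg: "0 \<le> Re (qinner X x x)"
  by (simp add: qinner_self sum_nonneg)

lemma qinner_self_eq_0:
  assumes "finite X" and "Re (qinner X x x) \<le> 0" and "s \<in> asg X"
  shows "x s = 0"
proof -
  have "(\<Sum>s\<in>asg X. (cmod (x s))\<^sup>2) = 0"
    using assms(2) qinner_self_nonneg[of X x] by (simp add: qinner_self)
  hence "\<forall>s\<in>asg X. (cmod (x s))\<^sup>2 = 0"
    using assms(1) by (subst sum_nonneg_eq_0_iff[symmetric]) (auto simp: finite_asg)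
  thus ?thesis using assms(3) by simp
qed

lemma qinner_add_left: "qinner X (y + z) x = qinner X y x + qinner X z x"
  by (simp add: qinner_def sum.distrib algebra_simps)

lemma qinner_add_right: "qinner X x (y + z) = qinner X x y + qinner X x z"
  by (simp add: qinner_def sum.distrib algebra_simps)

lemma qinner_diff_right: "qinner X x (y - z) = qinner X x y - qinner X x z"
  by (simp add: qinner_def sum_subtractf algebra_simps)

lemma qinner_scale_left: "qinner X (\<lambda>s. c * y s) x = cnj c * qinner X y x"
  by (simp add: qinner_def sum_distrib_left algebra_simps)

lemma qinner_scale_right: "qinner X x (\<lambda>s. c * y s) = c * qinner X x y"
  by (simp add: qinner_def sum_distrib_left algebra_simps)

lemma qinner_sum_list_right: "qinner X x (sum_list (map f xs)) = sum_list (map (\<lambda>z. qinner X x (f z)) xs)"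
  by (simp add: qinner_def sum_list_map_apply sum_list_const_mult[symmetric] sum_sum_list_swap)

lemma qinner_apply_idop: "finite X \<Longrightarrow> qinner X x (apply_op X (idop X) y) = qinner X x y"
  by (simp add: qinner_def apply_idop)

lemma qtrace_outer: "qtrace X (outer x x) = qinner X x x"
  by (simp add: qtrace_def outer_def qinner_def mult.commute)

lemma qtrace_mmul_outer: "qtrace X (mmul X A (outer x y)) = qinner X y (apply_op X A x)"
  by (simp add: qtrace_def outer_def qinner_def mmul_def apply_op_def sum_distrib_right
      sum_distrib_left mult.commute mult.left_commute)

lemma conj_outer: "mmul X (mmul X K (outer x x)) (adj K) = outer (apply_op X K x) (apply_op X K x)"
  by (simp add: fun_eq_iff mmul_def outer_def adj_def apply_op_def sum_distrib_right
      sum_distrib_left mult.commute mult.left_commute)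

lemma positive_iff_qinner:
  "positive X A \<longleftrightarrow> (\<forall>\<psi>. Im (qinner X \<psi> (apply_op X A \<psi>)) = 0 \<and> 0 \<le> Re (qinner X \<psi> (apply_op X A \<psi>)))"
proof -
  have "(\<Sum>s\<in>asg X. \<Sum>t\<in>asg X. cnj (\<psi> s) * A s t * \<psi> t) = qinner X \<psi> (apply_op X A \<psi>)" for \<psi>
    by (simp add: qinner_def apply_op_def sum_distrib_left mult.assoc)
  thus ?thesis by (simp add: positive_def Let_def)
qed

lemma positive_outer: "positive X (outer x x)"
proof -
  have "qinner X \<psi> (apply_op X (outer x x) \<psi>) = qinner X \<psi> x * cnj (qinner X \<psi> x)" for \<psi>
    by (simp add: qinner_def apply_op_def outer_def sum_distrib_left sum_distrib_right
        mult.commute mult.left_commute)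
  thus ?thesis by (simp add: positive_iff_qinner complex_norm_square[symmetric])
qed

lemma positive_conj: "positive X \<rho> \<Longrightarrow> positive X (mmul X (mmul X (adj B) \<rho>) B)"
  by (simp add: positive_iff_qinner apply_mmul qinner_adj')

lemma qtrace_conj_nonneg:
  assumes "positive X \<rho>"
  shows "0 \<le> Re (qtrace X (mmul X (mmul X B \<rho>) (adj B)))"
proof -
  have "qtrace X (mmul X (mmul X B \<rho>) (adj B))
      = (\<Sum>s\<in>asg X. \<Sum>w\<in>asg X. \<Sum>u\<in>asg X. B s u * \<rho> u w * cnj (B s w))"
    by (simp add: qtrace_def mmul_def adj_def sum_distrib_right)
  also have "\<dots> = (\<Sum>s\<in>asg X. \<Sum>u\<in>asg X. \<Sum>w\<in>asg X. B s u * \<rho> u w * cnj (B s w))"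
    by (rule sum.cong[OF refl], rule sum.swap)
  also have "\<dots> = (\<Sum>s\<in>asg X. qinner X (\<lambda>u. cnj (B s u)) (apply_op X \<rho> (\<lambda>u. cnj (B s u))))"
    by (simp add: qinner_def apply_op_def sum_distrib_left mult.assoc)
  finally show ?thesis using assms by (simp add: positive_iff_qinner sum_nonneg)
qed

lemma density_outer: "Re (qinner X \<phi> \<phi>) \<le> 1 \<Longrightarrow> density X (outer \<phi> \<phi>)"
  by (simp add: density_def positive_outer qtrace_outer)

lemma exists_normalising_scalar:
  "\<exists>c::real. c > 0 \<and> Re (qinner X (\<lambda>s. complex_of_real c * \<psi> s) (\<lambda>s. complex_of_real c * \<psi> s)) \<le> 1"
proof -
  define n where "n = Re (qinner X \<psi> \<psi>)"
  have n0: "0 \<le> n" by (simp add: n_def qinner_self_nonneg)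
  define c where "c = 1 / (1 + n)"
  have "Re (qinner X (\<lambda>s. complex_of_real c * \<psi> s) (\<lambda>s. complex_of_real c * \<psi> s)) = c * c * n"
    by (simp add: qinner_scale_left qinner_scale_right n_def)
  also have "\<dots> \<le> 1"
  proof -
    have "n \<le> (1 + n) * (1 + n)" using n0 by (simp add: algebra_simps)
    hence "n / ((1 + n) * (1 + n)) \<le> 1" using n0 by (simp add: divide_le_eq)
    thus ?thesis by (simp add: c_def)
  qed
  finally show ?thesis using n0 by (intro exI[of _ c]) (simp add: c_def)
qed

text \<open>The matrix identity \<open>N A = 0\<close> for a projector \<open>A\<close> only has to be checked on
  unit-bounded vectors of the range of \<open>A\<close>: the columns of \<open>A\<close> lie in that range.\<close>

lemma mmul_proj_eq_0I:
  assumes fin: "finite X" and A: "is_proj X A" and N: "op_on X N"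
    and h: "\<And>\<psi> s. apply_op X A \<psi> = \<psi> \<Longrightarrow> Re (qinner X \<psi> \<psi>) \<le> 1 \<Longrightarrow> s \<in> asg X
              \<Longrightarrow> apply_op X N \<psi> s = 0"
  shows "mmul X N A = 0"
proof (intro ext)
  fix s t
  show "mmul X N A s t = 0 s t"
  proof (cases "s \<in> asg X \<and> t \<in> asg X")
    case True
    define \<psi> where "\<psi> = (\<lambda>u. A u t)"
    obtain c :: real where c: "c > 0"
      and c1: "Re (qinner X (\<lambda>s. complex_of_real c * \<psi> s) (\<lambda>s. complex_of_real c * \<psi> s)) \<le> 1"
      using exists_normalising_scalar by blast
    have "apply_op X A \<psi> = (\<lambda>u. mmul X A A u t)" by (simp add: \<psi>_def apply_op_def mmul_def)
    also have "\<dots> = \<psi>" using A by (simp add: is_proj_def \<psi>_def)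
    finally have "apply_op X A (\<lambda>s. complex_of_real c * \<psi> s) = (\<lambda>s. complex_of_real c * \<psi> s)"
      by (simp add: apply_scale)
    hence "complex_of_real c * apply_op X N \<psi> s = 0"
      using h[OF _ c1] True by (simp add: apply_scale)
    thus ?thesis using c by (simp add: \<psi>_def apply_op_def mmul_def)
  next
    case False
    have "op_on X (mmul X N A)" using N A by (simp add: is_proj_def)
    thus ?thesis using False by (auto simp: op_on_def)
  qed
qed

text \<open>A vector annihilated by the quadratic form of a positive Hermitian \<open>H\<close> lies in its
  kernel; the proof expands the form at \<open>\<psi> + t H \<psi>\<close> for a suitable real \<open>t\<close>.\<close>

lemma psd_kernel:
  assumes f: "finite X" and h: "adj H = H"
    and psd: "\<And>\<phi>. 0 \<le> Re (qinner X \<phi> (apply_op X H \<phi>))"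
    and z: "Re (qinner X \<psi> (apply_op X H \<psi>)) \<le> 0"
    and s: "s \<in> asg X"
  shows "apply_op X H \<psi> s = 0"
proof -
  define y where "y = apply_op X H \<psi>"
  define n where "n = Re (qinner X y y)"
  define c where "c = Re (qinner X y (apply_op X H y))"
  have c0: "0 \<le> c" using psd by (simp add: c_def)
  have yy: "qinner X y y = complex_of_real n" using qinner_self[of X y] by (simp add: n_def)
  have e1: "qinner X \<psi> (apply_op X H y) = complex_of_real n"
    using qinner_adj[of X \<psi> H y] h yy by (simp add: y_def)
  have e2: "qinner X y (apply_op X H \<psi>) = complex_of_real n" using yy by (simp add: y_def)
  define t :: real where "t = - n / (c + 1)"
  have "0 \<le> Re (qinner X (\<psi> + (\<lambda>s. complex_of_real t * y s)) (apply_op X H (\<psi> + (\<lambda>s. complex_of_real t * y s))))"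
    by (rule psd)
  also have "\<dots> = Re (qinner X \<psi> (apply_op X H \<psi>)) + 2 * t * n + t * t * c"
    by (simp add: apply_add apply_scale qinner_add_left qinner_add_right qinner_scale_left
        qinner_scale_right e1 e2 c_def y_def[symmetric] n_def algebra_simps)
  finally have a: "0 \<le> 2 * t * n + t * t * c" using z by (simp add: y_def)
  have tc: "t * (c + 1) = - n" using c0 by (simp add: t_def)
  have "(2 * t * n + t * t * c) * ((c + 1) * (c + 1))
      = 2 * n * (t * (c + 1)) * (c + 1) + (t * (c + 1)) * (t * (c + 1)) * c"
    by (simp add: algebra_simps)
  also have "\<dots> = - (n * n * (c + 2))" unfolding tc by (simp add: algebra_simps)
  finally have "0 \<le> - (n * n * (c + 2))" using a c0 by (metis zero_le_mult_iff zero_le_square)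
  hence "n * n \<le> 0" using c0 by (simp add: mult_le_0_iff)
  hence "Re (qinner X y y) \<le> 0" by (auto simp: n_def mult_le_0_iff)
  thus ?thesis using qinner_self_eq_0[OF f _ s] by (simp add: y_def)
qed

section \<open>Kraus representations and Hoare triples on a fixed system\<close>

definition kraus_on :: "nat set \<Rightarrow> superop \<Rightarrow> qop list \<Rightarrow> bool" where
  "kraus_on X G Ks \<longleftrightarrow> (\<forall>K\<in>set Ks. op_on X K) \<and>
     (\<forall>A. clip X (G A) = (\<Sum>K\<leftarrow>Ks. mmul X (mmul X K A) (adj K)))"

definition kraus_sum :: "nat set \<Rightarrow> qop list \<Rightarrow> qop" where
  "kraus_sum X Ks = (\<Sum>K\<leftarrow>Ks. mmul X (adj K) K)"

definition defect :: "nat set \<Rightarrow> qop list \<Rightarrow> qop" where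
  "defect X Ks = idop X - kraus_sum X Ks"

definition maps_range :: "nat set \<Rightarrow> qop \<Rightarrow> qop \<Rightarrow> qop \<Rightarrow> bool" where
  "maps_range X K A B \<longleftrightarrow> mmul X (idop X - B) (mmul X K A) = 0"

definition par_on :: "nat set \<Rightarrow> superop \<Rightarrow> qop \<Rightarrow> qop \<Rightarrow> bool" where
  "par_on X G A B \<longleftrightarrow> (\<forall>\<rho>. density X \<rho> \<longrightarrow> Re (qtrace X (mmul X A \<rho>))
     \<le> Re (qtrace X (mmul X B (G \<rho>))) + Re (qtrace X \<rho>) - Re (qtrace X (G \<rho>)))"

definition tot_on :: "nat set \<Rightarrow> superop \<Rightarrow> qop \<Rightarrow> qop \<Rightarrow> bool" where
  "tot_on X G A B \<longleftrightarrow> (\<forall>\<rho>. density X \<rho> \<longrightarrow>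
     Re (qtrace X (mmul X A \<rho>)) \<le> Re (qtrace X (mmul X B (G \<rho>))))"

lemma op_on_defect: "kraus_on X G Ks \<Longrightarrow> op_on X (defect X Ks)"
  by (simp add: defect_def kraus_sum_def kraus_on_def)

lemma adj_defect: "adj (defect X Ks) = defect X Ks"
  by (simp add: defect_def kraus_sum_def adj_diff adj_sum_list adj_mmul o_def)

lemma qtrace_mmul_kraus:
  assumes "kraus_on X G Ks"
  shows "qtrace X (mmul X B (G \<rho>)) = (\<Sum>K\<leftarrow>Ks. qtrace X (mmul X B (mmul X (mmul X K \<rho>) (adj K))))"
proof -
  have "qtrace X (mmul X B (G \<rho>)) = qtrace X (mmul X B (clip X (G \<rho>)))"
    by (simp add: qtrace_mmul_clip_right)
  also have "\<dots> = qtrace X (mmul X B (\<Sum>K\<leftarrow>Ks. mmul X (mmul X K \<rho>) (adj K)))"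
    using assms by (simp add: kraus_on_def)
  finally show ?thesis by (simp add: mmul_sum_list_right qtrace_sum_list o_def)
qed

lemma qtrace_kraus:
  assumes "kraus_on X G Ks"
  shows "qtrace X (G \<rho>) = (\<Sum>K\<leftarrow>Ks. qtrace X (mmul X (mmul X K \<rho>) (adj K)))"
proof -
  have "qtrace X (G \<rho>) = qtrace X (clip X (G \<rho>))" by (simp add: qtrace_clip)
  also have "\<dots> = qtrace X (\<Sum>K\<leftarrow>Ks. mmul X (mmul X K \<rho>) (adj K))"
    using assms by (simp add: kraus_on_def)
  finally show ?thesis by (simp add: qtrace_sum_list o_def)
qed

lemma qtrace_kraus_outer:
  "kraus_on X G Ks \<Longrightarrow> qtrace X (G (outer \<phi> \<phi>)) = (\<Sum>K\<leftarrow>Ks. qinner X (apply_op X K \<phi>) (apply_op X K \<phi>))"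
  by (simp add: qtrace_kraus conj_outer qtrace_outer)

lemma qtrace_proj_outer:
  assumes "is_proj X B"
  shows "qtrace X (mmul X B (outer y y)) = qinner X (apply_op X B y) (apply_op X B y)"
proof -
  have "qtrace X (mmul X B (outer y y)) = qinner X y (apply_op X (adj B) (apply_op X B y))"
    using assms by (simp add: qtrace_mmul_outer is_proj_def flip: apply_mmul)
  thus ?thesis by (simp add: qinner_adj')
qed

lemma qinner_proj_split:
  assumes "finite X" and "is_proj X B"
  shows "qinner X y y = qinner X (apply_op X B y) (apply_op X B y)
    + qinner X (apply_op X (idop X - B) y) (apply_op X (idop X - B) y)"
proof -
  have "qinner X y y = qtrace X (mmul X (idop X) (outer y y))"
    using assms by (simp add: qtrace_mmul_idop qtrace_outer)
  also have "\<dots> = qtrace X (mmul X B (outer y y)) + qtrace X (mmul X (idop X - B) (outer y y))"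
    by (simp add: mmul_diff_left qtrace_diff)
  finally show ?thesis using assms is_proj_compl by (simp add: qtrace_proj_outer)
qed

lemma qtrace_kraus_outer_split:
  assumes "finite X" and "kraus_on X G Ks" and "is_proj X B"
  shows "Re (qtrace X (G (outer \<phi> \<phi>))) = Re (qtrace X (mmul X B (G (outer \<phi> \<phi>))))
    + (\<Sum>K\<leftarrow>Ks. Re (qinner X (apply_op X (idop X - B) (apply_op X K \<phi>))
                             (apply_op X (idop X - B) (apply_op X K \<phi>))))"
proof -
  have "Re (qinner X (apply_op X K \<phi>) (apply_op X K \<phi>)) =
      Re (qinner X (apply_op X B (apply_op X K \<phi>)) (apply_op X B (apply_op X K \<phi>))) +
      Re (qinner X (apply_op X (idop X - B) (apply_op X K \<phi>)) (apply_op X (idop X - B) (apply_op X K \<phi>)))" for K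
    using qinner_proj_split[OF assms(1,3), of "apply_op X K \<phi>"] by simp
  hence "Re (qtrace X (G (outer \<phi> \<phi>))) = (\<Sum>K\<leftarrow>Ks.
      Re (qinner X (apply_op X B (apply_op X K \<phi>)) (apply_op X B (apply_op X K \<phi>))) +
      Re (qinner X (apply_op X (idop X - B) (apply_op X K \<phi>)) (apply_op X (idop X - B) (apply_op X K \<phi>))))"
    by (simp add: qtrace_kraus_outer[OF assms(2)] Re_sum_list)
  also have "\<dots> = Re (qtrace X (mmul X B (G (outer \<phi> \<phi>))))
    + (\<Sum>K\<leftarrow>Ks. Re (qinner X (apply_op X (idop X - B) (apply_op X K \<phi>))
                             (apply_op X (idop X - B) (apply_op X K \<phi>))))"
    using assms(3) by (simp add: sum_list_addf qtrace_mmul_kraus[OF assms(2)] conj_outer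
        qtrace_proj_outer Re_sum_list)
  finally show ?thesis .
qed

lemma qinner_defect:
  assumes "finite X" and "kraus_on X G Ks"
  shows "qinner X x (apply_op X (defect X Ks) x) = qtrace X (outer x x) - qtrace X (G (outer x x))"
  using assms by (simp add: defect_def kraus_sum_def apply_diff qinner_diff_right qinner_apply_idop
      apply_sum_list qinner_sum_list_right apply_mmul qinner_adj' o_def qtrace_kraus_outer qtrace_outer)

lemma qinner_defect_nonneg:
  assumes "finite X" and "kraus_on X G Ks" and "trace_nonincreasing X G"
  shows "0 \<le> Re (qinner X x (apply_op X (defect X Ks) x))"
  using assms positive_outer by (simp add: qinner_defect trace_nonincreasing_def)

lemma tot_on_imp_par_on: "trace_nonincreasing X G \<Longrightarrow> tot_on X G A B \<Longrightarrow> par_on X G A B"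
  by (fastforce simp: tot_on_def par_on_def trace_nonincreasing_def density_def)

lemma par_on_imp_maps_range:
  assumes fin: "finite X" and G: "kraus_on X G Ks" and A: "is_proj X A" and B: "is_proj X B"
    and par: "par_on X G A B" and K: "K \<in> set Ks"
  shows "maps_range X K A B"
proof -
  have "mmul X (mmul X (idop X - B) K) A = 0"
  proof (rule mmul_proj_eq_0I[OF fin A])
    show "op_on X (mmul X (idop X - B) K)" using G K B by (simp add: kraus_on_def is_proj_def)
    fix \<psi> s assume fixed: "apply_op X A \<psi> = \<psi>" and norm: "Re (qinner X \<psi> \<psi>) \<le> 1"
      and s: "s \<in> asg X"
    define g where "g = (\<lambda>K. Re (qinner X (apply_op X (idop X - B) (apply_op X K \<psi>))
                                         (apply_op X (idop X - B) (apply_op X K \<psi>))))"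
    have "Re (qtrace X (mmul X A (outer \<psi> \<psi>))) = Re (qtrace X (outer \<psi> \<psi>))"
      using fixed by (simp add: qtrace_mmul_outer qtrace_outer)
    hence "sum_list (map g Ks) \<le> 0"
      using par density_outer[OF norm] qtrace_kraus_outer_split[OF fin G B, of \<psi>]
      unfolding par_on_def g_def by fastforce
    moreover have "g K \<le> sum_list (map g Ks)"
      using K by (intro member_le_sum_list) (auto simp: g_def qinner_self_nonneg)
    ultimately have "g K \<le> 0" by linarith
    thus "apply_op X (mmul X (idop X - B) K) \<psi> s = 0"
      using qinner_self_eq_0[OF fin _ s] by (simp add: g_def apply_mmul)
  qed
  thus ?thesis by (simp add: maps_range_def mmul_assoc)
qed

lemma tot_on_imp_defect:
  assumes fin: "finite X" and G: "kraus_on X G Ks" and tn: "trace_nonincreasing X G"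
    and A: "is_proj X A" and B: "is_proj X B" and tot: "tot_on X G A B"
  shows "mmul X (defect X Ks) A = 0"
proof (rule mmul_proj_eq_0I[OF fin A op_on_defect[OF G]])
  fix \<psi> s assume fixed: "apply_op X A \<psi> = \<psi>" and norm: "Re (qinner X \<psi> \<psi>) \<le> 1"
    and s: "s \<in> asg X"
  have "0 \<le> (\<Sum>K\<leftarrow>Ks. Re (qinner X (apply_op X (idop X - B) (apply_op X K \<psi>))
                                (apply_op X (idop X - B) (apply_op X K \<psi>))))"
    by (rule sum_list_nonneg) (auto simp: qinner_self_nonneg)
  moreover have "Re (qtrace X (outer \<psi> \<psi>)) \<le> Re (qtrace X (mmul X B (G (outer \<psi> \<psi>))))"
    using tot density_outer[OF norm] fixed unfolding tot_on_def
    by (metis qtrace_mmul_outer qtrace_outer)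
  ultimately have "Re (qinner X \<psi> (apply_op X (defect X Ks) \<psi>)) \<le> 0"
    using qtrace_kraus_outer_split[OF fin G B, of \<psi>] by (simp add: qinner_defect[OF fin G])
  thus "apply_op X (defect X Ks) \<psi> s = 0"
    using psd_kernel[OF fin adj_defect qinner_defect_nonneg[OF fin G tn] _ s] by blast
qed

lemma qtrace_proj_conj:
  assumes "is_proj X B"
  shows "qtrace X (mmul X B (mmul X (mmul X K R) (adj K)))
    = qtrace X (mmul X (mmul X (mmul X B K) R) (adj (mmul X B K)))"
proof -
  have "qtrace X (mmul X B (mmul X (mmul X K R) (adj K)))
      = qtrace X (mmul X (mmul X B B) (mmul X (mmul X K R) (adj K)))"
    using assms by (simp add: is_proj_def)
  also have "\<dots> = qtrace X (mmul X B (mmul X (mmul X (mmul X K R) (adj K)) B))"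
    by (simp add: mmul_assoc qtrace_mmul_commute[of X B])
  also have "\<dots> = qtrace X (mmul X (mmul X (mmul X B K) R) (adj (mmul X B K)))"
    using assms by (simp add: mmul_assoc adj_mmul is_proj_def)
  finally show ?thesis .
qed

lemma qtrace_adj_mmul_nonneg:
  assumes "positive X \<rho>"
  shows "0 \<le> Re (qtrace X (mmul X (mmul X (adj M) M) \<rho>))"
proof -
  have "qtrace X (mmul X (mmul X (adj M) M) \<rho>) = qtrace X (mmul X (mmul X M \<rho>) (adj M))"
    by (simp add: mmul_assoc qtrace_mmul_commute[of X "adj M"])
  thus ?thesis using qtrace_conj_nonneg[OF assms] by simp
qed

text \<open>If \<open>K\<close> maps the range of \<open>A\<close> into that of \<open>B\<close>, then the part of \<open>K \<rho> K\<^sup>\<dagger>\<close> outside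
  \<open>B\<close> only sees the compression of \<open>\<rho>\<close> to the complement of \<open>A\<close>.\<close>

lemma qtrace_compl_conj_le:
  assumes fin: "finite X" and A: "is_proj X A" and B: "is_proj X B" and K: "op_on X K"
    and maps: "maps_range X K A B" and pos: "positive X \<rho>"
  defines "A' \<equiv> idop X - A" and "B' \<equiv> idop X - B"
  shows "Re (qtrace X (mmul X B' (mmul X (mmul X K \<rho>) (adj K))))
    \<le> Re (qtrace X (mmul X (mmul X K (mmul X (mmul X A' \<rho>) A')) (adj K)))"
proof -
  define \<sigma> where "\<sigma> = mmul X (mmul X A' \<rho>) A'"
  have A': "is_proj X A'" and B': "is_proj X B'"
    using is_proj_compl[OF fin A] is_proj_compl[OF fin B] by (simp_all add: A'_def B'_def)
  have \<sigma>: "positive X \<sigma>" using positive_conj[OF pos, of A'] A' by (simp add: is_proj_def \<sigma>_def)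
  have "mmul X (mmul X B' K) A' = mmul X B' K"
    using maps K B' fin
    by (simp add: A'_def B'_def maps_range_def mmul_diff_right mmul_assoc mmul_idop_right is_proj_def)
  hence "mmul X (mmul X (mmul X B' K) \<rho>) (adj (mmul X B' K))
      = mmul X (mmul X (mmul X (mmul X B' K) A') \<rho>) (adj (mmul X (mmul X B' K) A'))"
    by simp
  also have "\<dots> = mmul X (mmul X (mmul X B' K) \<sigma>) (adj (mmul X B' K))"
    using A' by (simp add: \<sigma>_def adj_mmul mmul_assoc is_proj_def)
  finally have "mmul X (mmul X (mmul X B' K) \<rho>) (adj (mmul X B' K))
      = mmul X (mmul X (mmul X B' K) \<sigma>) (adj (mmul X B' K))" .
  hence "qtrace X (mmul X B' (mmul X (mmul X K \<rho>) (adj K)))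
      = qtrace X (mmul X B' (mmul X (mmul X K \<sigma>) (adj K)))"
    by (simp add: qtrace_proj_conj[OF B'])
  also have "\<dots> = qtrace X (mmul X (mmul X K \<sigma>) (adj K)) - qtrace X (mmul X B (mmul X (mmul X K \<sigma>) (adj K)))"
    by (simp add: B'_def mmul_diff_left qtrace_diff qtrace_mmul_idop fin)
  moreover have "0 \<le> Re (qtrace X (mmul X B (mmul X (mmul X K \<sigma>) (adj K))))"
    using qtrace_conj_nonneg[OF \<sigma>, of "mmul X B K"] by (simp add: qtrace_proj_conj[OF B])
  ultimately show ?thesis by (simp add: \<sigma>_def)
qed

lemma maps_range_imp_par_on:
  assumes fin: "finite X" and G: "kraus_on X G Ks" and tn: "trace_nonincreasing X G"
    and A: "is_proj X A" and B: "is_proj X B" and maps: "\<forall>K\<in>set Ks. maps_range X K A B"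
  shows "par_on X G A B"
  unfolding par_on_def
proof (intro allI impI)
  fix \<rho> assume "density X \<rho>"
  hence pos: "positive X \<rho>" by (simp add: density_def)
  define A' where "A' = idop X - A"
  define \<sigma> where "\<sigma> = mmul X (mmul X A' \<rho>) A'"
  have A': "is_proj X A'" using is_proj_compl[OF fin A] by (simp add: A'_def)
  have \<sigma>: "positive X \<sigma>" using positive_conj[OF pos, of A'] A' by (simp add: is_proj_def \<sigma>_def)
  have "Re (qtrace X (mmul X (idop X - B) (G \<rho>)))
      = (\<Sum>K\<leftarrow>Ks. Re (qtrace X (mmul X (idop X - B) (mmul X (mmul X K \<rho>) (adj K)))))"
    by (simp add: qtrace_mmul_kraus[OF G] Re_sum_list)
  also have "\<dots> \<le> (\<Sum>K\<leftarrow>Ks. Re (qtrace X (mmul X (mmul X K \<sigma>) (adj K))))"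
    using G maps by (intro sum_list_mono)
      (auto simp: kraus_on_def \<sigma>_def A'_def intro!: qtrace_compl_conj_le[OF fin A B _ _ pos])
  also have "\<dots> = Re (qtrace X (G \<sigma>))" by (simp add: qtrace_kraus[OF G] Re_sum_list)
  also have "\<dots> \<le> Re (qtrace X \<sigma>)" using tn \<sigma> by (simp add: trace_nonincreasing_def)
  also have "qtrace X \<sigma> = qtrace X (mmul X A' \<rho>)"
    using A' by (simp add: \<sigma>_def qtrace_mmul_commute[of X "mmul X A' \<rho>"] mmul_assoc[symmetric] is_proj_def)
  finally have "Re (qtrace X (mmul X (idop X - B) (G \<rho>))) \<le> Re (qtrace X (mmul X A' \<rho>))" .
  moreover have "qtrace X (mmul X A' \<rho>) = qtrace X \<rho> - qtrace X (mmul X A \<rho>)"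
    by (simp add: A'_def mmul_diff_left qtrace_diff qtrace_mmul_idop fin)
  moreover have "qtrace X (mmul X (idop X - B) (G \<rho>)) = qtrace X (G \<rho>) - qtrace X (mmul X B (G \<rho>))"
    by (simp add: mmul_diff_left qtrace_diff qtrace_mmul_idop fin)
  ultimately show "Re (qtrace X (mmul X A \<rho>))
      \<le> Re (qtrace X (mmul X B (G \<rho>))) + Re (qtrace X \<rho>) - Re (qtrace X (G \<rho>))"
    by simp
qed

lemma qtrace_mmul_kraus_dual:
  assumes "kraus_on X G Ks"
  shows "qtrace X (mmul X B (G \<rho>)) = qtrace X (mmul X (\<Sum>K\<leftarrow>Ks. mmul X (adj K) (mmul X B K)) \<rho>)"
proof -
  have "qtrace X (mmul X B (mmul X (mmul X K \<rho>) (adj K)))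
      = qtrace X (mmul X (mmul X (adj K) (mmul X B K)) \<rho>)" for K
  proof -
    have "qtrace X (mmul X B (mmul X (mmul X K \<rho>) (adj K)))
        = qtrace X (mmul X (mmul X B (mmul X K \<rho>)) (adj K))"
      by (simp add: mmul_assoc)
    also have "\<dots> = qtrace X (mmul X (adj K) (mmul X B (mmul X K \<rho>)))" by (rule qtrace_mmul_commute)
    finally show ?thesis by (simp add: mmul_assoc)
  qed
  thus ?thesis by (simp add: qtrace_mmul_kraus[OF assms] mmul_sum_list_left qtrace_sum_list o_def)
qed

lemma proj_sandwich_decomp:
  assumes fin: "finite X" and A: "is_proj X A" and C: "op_on X C" "adj C = C"
    and CA: "mmul X C A = A"
  shows "C = A + mmul X (mmul X (idop X - A) C) (idop X - A)"
proof -
  have "mmul X A C = A" using arg_cong[OF CA, of adj] A C by (simp add: adj_mmul is_proj_def)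
  thus ?thesis
    using CA A C fin
    by (simp add: mmul_diff_left mmul_diff_right mmul_idop_left mmul_idop_right is_proj_def)
qed

text \<open>For total correctness, \<open>tr(B G(\<rho>)) = tr(C \<rho>)\<close> with \<open>C = \<Sum> K\<^sup>\<dagger> B K\<close>; the hypotheses give
  \<open>C A = A\<close>, hence \<open>C = A + A' C A'\<close> with \<open>A' = I - A\<close>, and \<open>A' C A' \<ge> 0\<close>.\<close>

lemma maps_range_imp_tot_on:
  assumes fin: "finite X" and G: "kraus_on X G Ks" and A: "is_proj X A" and B: "is_proj X B"
    and maps: "\<forall>K\<in>set Ks. maps_range X K A B" and def: "mmul X (defect X Ks) A = 0"
  shows "tot_on X G A B"
  unfolding tot_on_def
proof (intro allI impI)
  fix \<rho> assume "density X \<rho>"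
  hence pos: "positive X \<rho>" by (simp add: density_def)
  define A' where "A' = idop X - A"
  define C where "C = (\<Sum>K\<leftarrow>Ks. mmul X (adj K) (mmul X B K))"
  have opK: "op_on X K" if "K \<in> set Ks" for K using G that by (simp add: kraus_on_def)
  have opA: "op_on X A" and opC: "op_on X C" using A B opK by (auto simp: C_def is_proj_def)
  have "mmul X B (mmul X K A) = mmul X K A" if "K \<in> set Ks" for K
    using maps[rule_format, OF that] opK[OF that] opA fin
    by (simp add: maps_range_def mmul_diff_left mmul_idop_left)
  hence "mmul X C A = mmul X (kraus_sum X Ks) A"
    by (simp add: C_def kraus_sum_def mmul_sum_list_left mmul_assoc cong: map_cong)
  also have "\<dots> = A" using def opA fin by (simp add: defect_def mmul_diff_left mmul_idop_left)
  finally have "C = A + mmul X (mmul X A' C) A'"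
    using proj_sandwich_decomp[OF fin A opC] B
    by (simp add: A'_def C_def adj_sum_list adj_mmul mmul_assoc is_proj_def o_def)
  hence dec: "C = A + (\<Sum>K\<leftarrow>Ks. mmul X (mmul X A' (mmul X (adj K) (mmul X B K))) A')"
    by (simp add: C_def mmul_sum_list_left mmul_sum_list_right o_def)
  have "mmul X (mmul X A' (mmul X (adj K) (mmul X B K))) A'
      = mmul X (adj (mmul X B (mmul X K A'))) (mmul X B (mmul X K A'))" for K
    using B is_proj_compl[OF fin A] by (simp add: A'_def adj_mmul mmul_assoc proj_mmul_idem is_proj_def)
  hence "qtrace X (mmul X C \<rho>) = qtrace X (mmul X A \<rho>)
      + (\<Sum>K\<leftarrow>Ks. qtrace X (mmul X (mmul X (adj (mmul X B (mmul X K A'))) (mmul X B (mmul X K A'))) \<rho>))"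
    by (subst dec) (simp add: mmul_add_left qtrace_add mmul_sum_list_left qtrace_sum_list o_def)
  moreover have "0 \<le> (\<Sum>K\<leftarrow>Ks. Re (qtrace X (mmul X (mmul X (adj (mmul X B (mmul X K A'))) (mmul X B (mmul X K A'))) \<rho>)))"
    by (intro sum_list_nonneg) (auto intro: qtrace_adj_mmul_nonneg[OF pos])
  ultimately show "Re (qtrace X (mmul X A \<rho>)) \<le> Re (qtrace X (mmul X B (G \<rho>)))"
    using qtrace_mmul_kraus_dual[OF G, of B \<rho>] by (simp add: C_def[symmetric] Re_sum_list o_def)
qed

lemma par_on_iff:
  assumes "finite X" and "kraus_on X G Ks" and "trace_nonincreasing X G"
    and "is_proj X A" and "is_proj X B"
  shows "par_on X G A B \<longleftrightarrow> (\<forall>K\<in>set Ks. maps_range X K A B)"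
  using par_on_imp_maps_range[OF assms(1,2,4,5)] maps_range_imp_par_on[OF assms] by blast

lemma tot_on_iff:
  assumes "finite X" and "kraus_on X G Ks" and "trace_nonincreasing X G"
    and "is_proj X A" and "is_proj X B"
  shows "tot_on X G A B \<longleftrightarrow> (\<forall>K\<in>set Ks. maps_range X K A B) \<and> mmul X (defect X Ks) A = 0"
  using par_on_imp_maps_range[OF assms(1,2,4,5) tot_on_imp_par_on[OF assms(3)]]
    tot_on_imp_defect[OF assms] maps_range_imp_tot_on[OF assms(1,2,4,5)] by blast

section \<open>Extension to larger systems\<close>

lemma merge_outside: "q \<notin> W \<Longrightarrow> merge W a s q = s q"
  by (simp add: merge_def)

lemma restr_merge [simp]: "a \<in> asg V \<Longrightarrow> restr V (merge V a s) = a"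
  by (auto simp: restr_def merge_def asg_def fun_eq_iff)

lemma merge_restr [simp]: "merge V (restr V s) s = s"
  by (auto simp: restr_def merge_def fun_eq_iff)

lemma merge_merge [simp]: "merge V a (merge V b s) = merge V a s"
  by (auto simp: merge_def fun_eq_iff)

lemma merge_asg: "V \<subseteq> X \<Longrightarrow> a \<in> asg V \<Longrightarrow> s \<in> asg X \<Longrightarrow> merge V a s \<in> asg X"
  by (auto simp: merge_def asg_def)

lemma restr_asg [simp]: "restr V s \<in> asg V"
  by (auto simp: restr_def asg_def)

lemma restr_restr: "V \<subseteq> W \<Longrightarrow> restr V (restr W s) = restr V s"
  by (auto simp: restr_def fun_eq_iff)

lemma restr_asg_id: "s \<in> asg V \<Longrightarrow> restr V s = s"
  by (auto simp: restr_def asg_def fun_eq_iff)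

lemma bij_betw_merge:
  assumes "V \<subseteq> X" and "s \<in> asg X"
  shows "bij_betw (\<lambda>a. merge V a s) (asg V) {u\<in>asg X. \<forall>q\<in>X-V. s q = u q}"
proof (rule bij_betwI[where g = "restr V"])
  show "(\<lambda>a. merge V a s) \<in> asg V \<rightarrow> {u \<in> asg X. \<forall>q\<in>X - V. s q = u q}"
    using assms by (auto simp: merge_asg) (auto simp: merge_def)
  show "\<And>y. y \<in> {u \<in> asg X. \<forall>q\<in>X - V. s q = u q} \<Longrightarrow> merge V (restr V y) s = y"
    using assms(2) by (auto simp: merge_def restr_def asg_def fun_eq_iff)
qed auto

lemma sum_asg_fibre:
  assumes "finite X" and "V \<subseteq> X" and "s \<in> asg X"
  shows "(\<Sum>u\<in>asg X. if (\<forall>q\<in>X-V. s q = u q) then g u else 0) = (\<Sum>a\<in>asg V. g (merge V a s))"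
proof -
  have "(\<Sum>u\<in>asg X. if (\<forall>q\<in>X-V. s q = u q) then g u else 0) = (\<Sum>u\<in>{u\<in>asg X. \<forall>q\<in>X-V. s q = u q}. g u)"
    using assms(1) by (simp add: sum.inter_filter finite_asg)
  also have "\<dots> = (\<Sum>a\<in>asg V. g (merge V a s))"
    by (rule sum.reindex_bij_betw[OF bij_betw_merge[OF assms(2,3)], symmetric])
  finally show ?thesis .
qed

lemma sum_asg_split:
  assumes "V \<subseteq> X"
  shows "(\<Sum>s\<in>asg X. g s) = (\<Sum>r\<in>asg (X-V). \<Sum>a\<in>asg V. g (merge V a r))"
proof -
  have b: "bij_betw (\<lambda>(r,a). merge V a r) (asg (X-V) \<times> asg V) (asg X)"
  proof (rule bij_betwI[where g = "\<lambda>s. (restr (X-V) s, restr V s)"])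
    show "(\<lambda>(r, a). merge V a r) \<in> asg (X - V) \<times> asg V \<rightarrow> asg X"
      using assms by (auto simp: merge_def asg_def)
    show "\<And>x. x \<in> asg (X - V) \<times> asg V \<Longrightarrow>
        (restr (X - V) ((\<lambda>(r, a). merge V a r) x), restr V ((\<lambda>(r, a). merge V a r) x)) = x"
      by (auto simp: merge_def restr_def asg_def fun_eq_iff)
    show "\<And>y. y \<in> asg X \<Longrightarrow> (\<lambda>(r, a). merge V a r) (restr (X - V) y, restr V y) = y"
      using assms by (auto simp: merge_def restr_def asg_def fun_eq_iff)
  qed auto
  have "(\<Sum>r\<in>asg (X-V). \<Sum>a\<in>asg V. g (merge V a r)) = (\<Sum>(r,a)\<in>asg (X-V) \<times> asg V. g (merge V a r))"
    by (rule sum.cartesian_product)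
  also have "\<dots> = (\<Sum>s\<in>asg X. g s)"
    using sum.reindex_bij_betw[OF b, of g] by (simp add: case_prod_beta')
  finally show ?thesis by simp
qed

definition lift_op :: "nat set \<Rightarrow> nat set \<Rightarrow> qop \<Rightarrow> qop" where
  "lift_op W X A = clip X (ext_op W X A)"

lemma op_on_lift_op [simp]: "op_on X (lift_op W X A)"
  by (simp add: lift_op_def)

lemma lift_op_apply:
  "s \<in> asg X \<Longrightarrow> t \<in> asg X \<Longrightarrow>
    lift_op W X A s t = (if \<forall>q\<in>X-W. s q = t q then A (restr W s) (restr W t) else 0)"
  by (simp add: lift_op_def clip_def ext_op_def)

lemma lift_op_mmul:
  assumes f: "finite X" and WX: "W \<subseteq> X"
  shows "mmul X (lift_op W X A) (lift_op W X B) = lift_op W X (mmul W A B)"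
proof (intro ext)
  fix s t
  show "mmul X (lift_op W X A) (lift_op W X B) s t = lift_op W X (mmul W A B) s t"
  proof (cases "s \<in> asg X \<and> t \<in> asg X")
    case True
    have "mmul X (lift_op W X A) (lift_op W X B) s t =
      (\<Sum>u\<in>asg X. if (\<forall>q\<in>X-W. s q = u q) then A (restr W s) (restr W u) *
          (if \<forall>q\<in>X-W. u q = t q then B (restr W u) (restr W t) else 0) else 0)"
      unfolding mmul_def using True by (intro sum.cong refl) (auto simp: lift_op_apply)
    also have "\<dots> = (\<Sum>a\<in>asg W. A (restr W s) a *
          (if \<forall>q\<in>X-W. merge W a s q = t q then B a (restr W t) else 0))"
      by (subst sum_asg_fibre[OF f WX]) (use True in \<open>auto intro!: sum.cong\<close>)
    also have "\<dots> = (if \<forall>q\<in>X-W. s q = t q then (\<Sum>a\<in>asg W. A (restr W s) a * B a (restr W t)) else 0)"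
    proof (cases "\<forall>q\<in>X-W. s q = t q")
      case True
      thus ?thesis by (auto simp: merge_outside intro!: sum.cong)
    next
      case False
      hence "(\<forall>q\<in>X-W. merge W a s q = t q) = False" for a by (auto simp: merge_outside)
      thus ?thesis using False by (simp only: if_False if_not_P mult_zero_right sum.neutral_const)
    qed
    finally show ?thesis using True by (simp add: lift_op_apply mmul_def)
  next
    case False
    thus ?thesis by (auto simp: lift_op_def clip_def mmul_def)
  qed
qed

lemma lift_op_idop: "W \<subseteq> X \<Longrightarrow> lift_op W X (idop W) = idop X"
  by (auto simp: fun_eq_iff lift_op_def clip_def ext_op_def idop_def restr_def asg_def)

lemma lift_op_diff: "lift_op W X (A - B) = lift_op W X A - lift_op W X B"
  by (auto simp: fun_eq_iff lift_op_def clip_def ext_op_def)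

lemma lift_op_adj: "adj (lift_op W X A) = lift_op W X (adj A)"
  by (auto simp: fun_eq_iff lift_op_def clip_def ext_op_def adj_def)

lemma lift_op_zero [simp]: "lift_op W X 0 = 0"
  by (auto simp: fun_eq_iff lift_op_def clip_def ext_op_def)

lemma lift_op_add: "lift_op W X (A + B) = lift_op W X A + lift_op W X B"
  by (auto simp: fun_eq_iff lift_op_def clip_def ext_op_def algebra_simps)

lemma lift_op_scale: "lift_op W X (\<lambda>s t. c * A s t) = (\<lambda>s t. c * lift_op W X A s t)"
  by (auto simp: fun_eq_iff lift_op_def clip_def ext_op_def)

lemma lift_op_sum_list: "lift_op W X (sum_list (map f xs)) = sum_list (map (\<lambda>x. lift_op W X (f x)) xs)"
  by (induction xs) (simp_all only: list.map sum_list.Nil sum_list.Cons lift_op_add lift_op_zero)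

lemma lift_op_clip: "lift_op W X (clip W A) = lift_op W X A"
  by (auto simp: fun_eq_iff lift_op_def clip_def ext_op_def)

lemma lift_op_lift_op: "V \<subseteq> W \<Longrightarrow> W \<subseteq> X \<Longrightarrow> lift_op W X (lift_op V W A) = lift_op V X A"
  by (auto simp: fun_eq_iff lift_op_def clip_def ext_op_def restr_restr) (auto simp: restr_def)

lemma lift_op_self: "op_on W A \<Longrightarrow> lift_op W W A = A"
  by (auto simp: fun_eq_iff lift_op_def clip_def ext_op_def restr_asg_id op_on_def)

lemma is_proj_lift_op: "finite X \<Longrightarrow> W \<subseteq> X \<Longrightarrow> is_proj W P \<Longrightarrow> is_proj X (lift_op W X P)"
  by (auto simp: is_proj_def lift_op_mmul lift_op_adj)

lemma is_proj_lift_projector: "finite X \<Longrightarrow> W \<subseteq> X \<Longrightarrow> projector W P \<Longrightarrow> is_proj X (lift_op W X P)"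
  using is_proj_lift_op[OF _ _ is_proj_clip] by (simp add: lift_op_clip)

lemma apply_lift_op:
  assumes "finite X" and "V \<subseteq> X" and "s \<in> asg X"
  shows "apply_op X (lift_op V X N) \<psi> s = apply_op V N (\<lambda>a. \<psi> (merge V a s)) (restr V s)"
proof -
  have "apply_op X (lift_op V X N) \<psi> s
      = (\<Sum>u\<in>asg X. if (\<forall>q\<in>X-V. s q = u q) then N (restr V s) (restr V u) * \<psi> u else 0)"
    unfolding apply_op_def using assms(3) by (intro sum.cong refl) (auto simp: lift_op_apply)
  also have "\<dots> = apply_op V N (\<lambda>a. \<psi> (merge V a s)) (restr V s)"
    by (simp add: sum_asg_fibre[OF assms] apply_op_def)
  finally show ?thesis .
qed

lemma op_on_conj: "op_on X K \<Longrightarrow> op_on X (mmul X (mmul X K A) (adj K))"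
  by (auto simp: op_on_def mmul_def adj_def)

lemma conj_clip: "mmul X (mmul X (clip X K) A) (adj (clip X K)) = clip X (mmul X (mmul X K A) (adj K))"
  by (auto simp: fun_eq_iff mmul_def clip_def adj_def intro!: sum.cong)

lemma kraus_on_clip:
  assumes "is_kraus V G Ks"
  shows "kraus_on V G (map (clip V) Ks)"
  unfolding kraus_on_def
proof (intro conjI allI ballI)
  fix A
  have "clip V (G A) = clip V (\<Sum>K\<leftarrow>Ks. mmul V (mmul V K A) (adj K))"
    using assms by (auto simp: fun_eq_iff clip_def is_kraus_def sum_list_map_apply)
  also have "\<dots> = (\<Sum>K\<leftarrow>map (clip V) Ks. mmul V (mmul V K A) (adj K))"
    by (simp add: clip_sum_list o_def conj_clip)
  finally show "clip V (G A) = (\<Sum>K\<leftarrow>map (clip V) Ks. mmul V (mmul V K A) (adj K))" .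
qed auto

lemma is_kraus_if_kraus_on:
  assumes "kraus_on V G Ks"
  shows "is_kraus V G Ks"
  unfolding is_kraus_def
proof (intro allI ballI)
  fix A s t assume "s \<in> asg V" "t \<in> asg V"
  hence "G A s t = clip V (G A) s t" by (simp add: clip_def)
  also have "\<dots> = (\<Sum>K\<leftarrow>Ks. mmul V (mmul V K A) (adj K)) s t"
    using assms by (simp add: kraus_on_def)
  finally show "G A s t = (\<Sum>K\<leftarrow>Ks. mmul V (mmul V K A) (adj K) s t)"
    by (simp add: sum_list_map_apply)
qed

lemma kraus_on_ext_so:
  assumes f: "finite X" and VX: "V \<subseteq> X" and k: "kraus_on V E Es"
  shows "kraus_on X (ext_so V E) (map (lift_op V X) Es)"
  unfolding kraus_on_def
proof (intro conjI allI ballI ext)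
  fix A :: qop and s t
  let ?A = "\<lambda>a b. A (merge V a s) (merge V b t)"
  show "clip X (ext_so V E A) s t = (\<Sum>K\<leftarrow>map (lift_op V X) Es. mmul X (mmul X K A) (adj K)) s t"
  proof (cases "s \<in> asg X \<and> t \<in> asg X")
    case True
    have "clip X (ext_so V E A) s t = clip V (E ?A) (restr V s) (restr V t)"
      using True by (simp add: clip_def ext_so_def)
    also have "\<dots> = (\<Sum>K\<leftarrow>Es. mmul V (mmul V K ?A) (adj K) (restr V s) (restr V t))"
      using k by (simp add: kraus_on_def sum_list_map_apply)
    also have "\<dots> = (\<Sum>K\<leftarrow>Es. mmul X (mmul X (lift_op V X K) A) (adj (lift_op V X K)) s t)"
    proof (rule arg_cong[where f = sum_list], rule map_cong[OF refl])
      fix K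
      have "mmul X (mmul X (lift_op V X K) A) (adj (lift_op V X K)) s t
        = (\<Sum>w\<in>asg X. if (\<forall>q\<in>X-V. t q = w q) then
              (\<Sum>u\<in>asg X. if (\<forall>q\<in>X-V. s q = u q) then K (restr V s) (restr V u) * A u w else 0)
                * cnj (K (restr V t) (restr V w)) else 0)"
        unfolding mmul_def adj_def using True
        by (intro sum.cong refl) (auto simp: lift_op_apply intro!: sum.cong)
      also have "\<dots> = (\<Sum>b\<in>asg V. (\<Sum>a\<in>asg V. K (restr V s) a * ?A a b) * cnj (K (restr V t) b))"
        using True by (simp add: sum_asg_fibre[OF f VX] cong: sum.cong)
      finally show "mmul V (mmul V K ?A) (adj K) (restr V s) (restr V t)
           = mmul X (mmul X (lift_op V X K) A) (adj (lift_op V X K)) s t"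
        by (simp add: mmul_def adj_def)
    qed
    finally show ?thesis by (simp add: sum_list_map_apply o_def)
  next
    case False
    have "op_on X (\<Sum>K\<leftarrow>map (lift_op V X) Es. mmul X (mmul X K A) (adj K))"
      by (intro op_on_sum_list) (auto intro: op_on_conj)
    thus ?thesis using False by (auto simp: clip_def op_on_def)
  qed
qed auto

lemma trace_nonincreasing_ext_so:
  assumes f: "finite X" and VX: "V \<subseteq> X" and tn: "trace_nonincreasing V E"
  shows "trace_nonincreasing X (ext_so V E)"
  unfolding trace_nonincreasing_def
proof (intro allI impI)
  fix \<rho> assume pos: "positive X \<rho>"
  define blk where "blk = (\<lambda>s a b. \<rho> (merge V a s) (merge V b s))"
  have "qtrace X (ext_so V E \<rho>) = (\<Sum>s\<in>asg X. E (blk s) (restr V s) (restr V s))"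
    by (simp add: qtrace_def ext_so_def blk_def)
  also have "\<dots> = (\<Sum>r\<in>asg (X-V). qtrace V (E (blk r)))"
    by (simp add: sum_asg_split[OF VX] qtrace_def blk_def)
  finally have "qtrace X (ext_so V E \<rho>) = (\<Sum>r\<in>asg (X-V). qtrace V (E (blk r)))" .
  moreover have "qtrace X \<rho> = (\<Sum>r\<in>asg (X-V). qtrace V (blk r))"
    by (simp add: qtrace_def blk_def sum_asg_split[OF VX])
  moreover have "positive V (blk r)" if r: "r \<in> asg X" for r
    unfolding positive_def Let_def
  proof (intro allI)
    fix \<psi> :: qvec
    define \<psi>' where "\<psi>' = (\<lambda>u. if (\<forall>q\<in>X-V. r q = u q) then \<psi> (restr V u) else 0)"
    have "(\<Sum>s\<in>asg X. \<Sum>t\<in>asg X. cnj (\<psi>' s) * \<rho> s t * \<psi>' t)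
       = (\<Sum>s\<in>asg X. if (\<forall>q\<in>X-V. r q = s q) then (\<Sum>t\<in>asg X. if (\<forall>q\<in>X-V. r q = t q) then
            cnj (\<psi> (restr V s)) * \<rho> s t * \<psi> (restr V t) else 0) else 0)"
      by (intro sum.cong refl) (auto simp: \<psi>'_def intro!: sum.cong)
    also have "\<dots> = (\<Sum>a\<in>asg V. \<Sum>b\<in>asg V. cnj (\<psi> a) * blk r a b * \<psi> b)"
      by (subst sum_asg_fibre[OF f VX r], subst sum_asg_fibre[OF f VX r]) (simp add: blk_def)
    finally show "Im (\<Sum>s\<in>asg V. \<Sum>t\<in>asg V. cnj (\<psi> s) * blk r s t * \<psi> t) = 0 \<and>
          0 \<le> Re (\<Sum>s\<in>asg V. \<Sum>t\<in>asg V. cnj (\<psi> s) * blk r s t * \<psi> t)"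
      using pos unfolding positive_def Let_def by metis
  qed
  moreover have "asg (X - V) \<subseteq> asg X" by (auto simp: asg_def)
  ultimately show "Re (qtrace X (ext_so V E \<rho>)) \<le> Re (qtrace X \<rho>)"
    using tn by (auto simp: trace_nonincreasing_def intro!: sum_mono)
qed

lemma lift_op_defect:
  assumes "finite X" and "V \<subseteq> X"
  shows "defect X (map (lift_op V X) Es) = lift_op V X (defect V Es)"
  using assms by (simp add: defect_def kraus_sum_def lift_op_diff lift_op_idop lift_op_sum_list
      o_def lift_op_adj lift_op_mmul)

lemma par_on_ext_so_iff:
  assumes "finite X" and "V \<subseteq> X" and "kraus_on V E Es" and "trace_nonincreasing V E"
    and "is_proj X A" and "is_proj X B"
  shows "par_on X (ext_so V E) A B \<longleftrightarrow> (\<forall>K\<in>set Es. maps_range X (lift_op V X K) A B)"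
  using par_on_iff[OF assms(1) kraus_on_ext_so[OF assms(1-3)]
      trace_nonincreasing_ext_so[OF assms(1,2,4)] assms(5,6)] by simp

lemma tot_on_ext_so_iff:
  assumes "finite X" and "V \<subseteq> X" and "kraus_on V E Es" and "trace_nonincreasing V E"
    and "is_proj X A" and "is_proj X B"
  shows "tot_on X (ext_so V E) A B \<longleftrightarrow>
    (\<forall>K\<in>set Es. maps_range X (lift_op V X K) A B) \<and> mmul X (lift_op V X (defect V Es)) A = 0"
  using tot_on_iff[OF assms(1) kraus_on_ext_so[OF assms(1-3)]
      trace_nonincreasing_ext_so[OF assms(1,2,4)] assms(5,6)] by (simp add: lift_op_defect assms)

lemma sat_par_iff_par_on:
  "sat_par V W G P Q \<longleftrightarrow>
    (\<forall>X. finite X \<longrightarrow> V \<union> W \<subseteq> X \<longrightarrow> par_on X (ext_so V G) (lift_op W X P) (lift_op W X Q))"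
  by (simp add: sat_par_def par_on_def lift_op_def qtrace_mmul_clip_left)

lemma sat_tot_iff_tot_on:
  "sat_tot V W G P Q \<longleftrightarrow>
    (\<forall>X. finite X \<longrightarrow> V \<union> W \<subseteq> X \<longrightarrow> tot_on X (ext_so V G) (lift_op W X P) (lift_op W X Q))"
  by (simp add: sat_tot_def tot_on_def lift_op_def qtrace_mmul_clip_left)

lemma maps_range_lift_op:
  assumes "finite X" and "V \<subseteq> W" and "W \<subseteq> X" and "maps_range W (lift_op V W K) P Q"
  shows "maps_range X (lift_op V X K) (lift_op W X P) (lift_op W X Q)"
proof -
  have "lift_op V X K = lift_op W X (lift_op V W K)" using lift_op_lift_op[OF assms(2,3)] by simp
  moreover have "idop X - lift_op W X Q = lift_op W X (idop W - Q)"
    using lift_op_idop[OF assms(3)] by (simp add: lift_op_diff)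
  ultimately show ?thesis using assms by (simp add: maps_range_def lift_op_mmul)
qed

lemma sat_par_iff_maps_range:
  assumes W: "finite W" "V \<subseteq> W" and E: "kraus_on V E Es" "trace_nonincreasing V E"
    and P: "is_proj W P" and Q: "is_proj W Q"
  shows "sat_par V W E P Q \<longleftrightarrow> (\<forall>K\<in>set Es. maps_range W (lift_op V W K) P Q)"
proof
  assume "sat_par V W E P Q"
  hence "par_on W (ext_so V E) (lift_op W W P) (lift_op W W Q)"
    using W by (simp add: sat_par_iff_par_on Un_absorb1)
  thus "\<forall>K\<in>set Es. maps_range W (lift_op V W K) P Q"
    using par_on_ext_so_iff[OF W E P Q] P Q by (simp add: lift_op_self is_proj_def)
next
  assume maps: "\<forall>K\<in>set Es. maps_range W (lift_op V W K) P Q"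
  show "sat_par V W E P Q" unfolding sat_par_iff_par_on
  proof (intro allI impI)
    fix X assume X: "finite X" "V \<union> W \<subseteq> X"
    hence "V \<subseteq> X" "W \<subseteq> X" by auto
    thus "par_on X (ext_so V E) (lift_op W X P) (lift_op W X Q)"
      using maps X W by (simp add: par_on_ext_so_iff[OF X(1) _ E] is_proj_lift_op P Q maps_range_lift_op)
  qed
qed

lemma sat_tot_iff_maps_range:
  assumes W: "finite W" "V \<subseteq> W" and E: "kraus_on V E Es" "trace_nonincreasing V E"
    and P: "is_proj W P" and Q: "is_proj W Q"
  shows "sat_tot V W E P Q \<longleftrightarrow> (\<forall>K\<in>set Es. maps_range W (lift_op V W K) P Q)
    \<and> mmul W (lift_op V W (defect V Es)) P = 0"
proof
  assume "sat_tot V W E P Q"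
  hence "tot_on W (ext_so V E) (lift_op W W P) (lift_op W W Q)"
    using W by (simp add: sat_tot_iff_tot_on Un_absorb1)
  thus "(\<forall>K\<in>set Es. maps_range W (lift_op V W K) P Q) \<and> mmul W (lift_op V W (defect V Es)) P = 0"
    using tot_on_ext_so_iff[OF W E P Q] P Q by (simp add: lift_op_self is_proj_def)
next
  assume maps: "(\<forall>K\<in>set Es. maps_range W (lift_op V W K) P Q) \<and> mmul W (lift_op V W (defect V Es)) P = 0"
  show "sat_tot V W E P Q" unfolding sat_tot_iff_tot_on
  proof (intro allI impI)
    fix X assume X: "finite X" "V \<union> W \<subseteq> X"
    hence VX: "V \<subseteq> X" and WX: "W \<subseteq> X" by auto
    have "mmul X (lift_op V X (defect V Es)) (lift_op W X P) = lift_op W X (mmul W (lift_op V W (defect V Es)) P)"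
      by (simp add: lift_op_mmul[OF X(1) WX] lift_op_lift_op[OF W(2) WX, symmetric])
    thus "tot_on X (ext_so V E) (lift_op W X P) (lift_op W X Q)"
      using maps X W VX WX
      by (simp add: tot_on_ext_so_iff[OF X(1) VX E] is_proj_lift_op P Q maps_range_lift_op)
  qed
qed

section \<open>Gram--Schmidt for finitely supported vectors\<close>

definition fscale :: "complex \<Rightarrow> ('i \<Rightarrow> complex) \<Rightarrow> ('i \<Rightarrow> complex)" where
  "fscale c x = (\<lambda>i. c * x i)"

interpretation fvs: vector_space "fscale :: complex \<Rightarrow> ('i \<Rightarrow> complex) \<Rightarrow> ('i \<Rightarrow> complex)"
  by unfold_locales (auto simp: fscale_def fun_eq_iff algebra_simps)

definition finner :: "'i set \<Rightarrow> ('i \<Rightarrow> complex) \<Rightarrow> ('i \<Rightarrow> complex) \<Rightarrow> complex" where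
  "finner J x y = (\<Sum>j\<in>J. cnj (x j) * y j)"

definition supported_on :: "'i set \<Rightarrow> ('i \<Rightarrow> complex) \<Rightarrow> bool" where
  "supported_on J x \<longleftrightarrow> (\<forall>j. j \<notin> J \<longrightarrow> x j = 0)"

definition orthonormal_on :: "'i set \<Rightarrow> ('i \<Rightarrow> complex) set \<Rightarrow> bool" where
  "orthonormal_on J U \<longleftrightarrow> finite U \<and> (\<forall>u\<in>U. supported_on J u) \<and> (\<forall>u\<in>U. \<forall>w\<in>U. finner J u w = (if u = w then 1 else 0))"

definition orth_proj :: "'i set \<Rightarrow> ('i \<Rightarrow> complex) set \<Rightarrow> ('i \<Rightarrow> complex) \<Rightarrow> ('i \<Rightarrow> complex)" where
  "orth_proj J U x = (\<lambda>i. \<Sum>u\<in>U. finner J u x * u i)"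

lemma finner_add_right: "finner J x (y + z) = finner J x y + finner J x z"
  by (simp add: finner_def sum.distrib algebra_simps)

lemma finner_diff_right: "finner J x (y - z) = finner J x y - finner J x z"
  by (simp add: finner_def sum_subtractf algebra_simps)

lemma finner_scale_right: "finner J x (fscale c y) = c * finner J x y"
  by (simp add: finner_def fscale_def sum_distrib_left algebra_simps)

lemma finner_scale_left: "finner J (fscale c y) x = cnj c * finner J y x"
  by (simp add: finner_def fscale_def sum_distrib_left algebra_simps)

lemma cnj_finner: "cnj (finner J x y) = finner J y x"
  by (simp add: finner_def mult.commute)

lemma finner_sum_right: "finner J x (\<lambda>i. \<Sum>u\<in>U. f u * u i) = (\<Sum>u\<in>U. f u * finner J x u)"
  by (simp add: finner_def sum_distrib_left sum.swap[of _ J] algebra_simps)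

lemma orth_proj_add: "orth_proj J U (x + y) = orth_proj J U x + orth_proj J U y"
  by (simp add: orth_proj_def fun_eq_iff finner_add_right sum.distrib algebra_simps)

lemma orth_proj_scale: "orth_proj J U (fscale c x) = fscale c (orth_proj J U x)"
  by (simp add: orth_proj_def finner_scale_right) (simp add: fscale_def fun_eq_iff sum_distrib_left algebra_simps)

lemma orth_proj_as_sum: "orth_proj J U x = (\<Sum>u\<in>U. fscale (finner J u x) u)"
  by (simp add: orth_proj_def fun_eq_iff fscale_def sum_map_apply)

lemma orth_proj_in_span: "orth_proj J U x \<in> fvs.span U"
  unfolding orth_proj_as_sum by (intro fvs.span_sum fvs.span_scale fvs.span_base)

lemma orth_proj_basis_fix:
  assumes o: "orthonormal_on J U" and u: "u \<in> U"
  shows "orth_proj J U u = u"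
proof -
  have "orth_proj J U u = (\<lambda>i. \<Sum>w\<in>U. (if w = u then u i else 0))"
    unfolding orth_proj_def using o u by (intro ext sum.cong refl) (auto simp: orthonormal_on_def)
  also have "\<dots> = u" using o u by (simp add: orthonormal_on_def sum.delta')
  finally show ?thesis .
qed

lemma orth_proj_fix_span:
  assumes o: "orthonormal_on J U" and x: "x \<in> fvs.span U"
  shows "orth_proj J U x = x"
proof -
  have "fvs.subspace {x. orth_proj J U x = x}"
    unfolding fvs.subspace_def
    by (auto simp: orth_proj_add orth_proj_scale) (simp add: orth_proj_def finner_def fun_eq_iff)
  moreover have "U \<subseteq> {x. orth_proj J U x = x}" using orth_proj_basis_fix[OF o] by auto
  ultimately have "fvs.span U \<subseteq> {x. orth_proj J U x = x}" by (rule fvs.span_minimal[rotated])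
  thus ?thesis using x by auto
qed

lemma orth_proj_idem: "orthonormal_on J U \<Longrightarrow> orth_proj J U (orth_proj J U x) = orth_proj J U x"
  by (rule orth_proj_fix_span[OF _ orth_proj_in_span])

lemma finner_orth_proj_residual:
  assumes o: "orthonormal_on J U" and u: "u \<in> U"
  shows "finner J u (x - orth_proj J U x) = 0"
proof -
  have "finner J u (orth_proj J U x) = (\<Sum>w\<in>U. finner J w x * finner J u w)"
    unfolding orth_proj_def by (rule finner_sum_right)
  also have "\<dots> = (\<Sum>w\<in>U. if w = u then finner J u x else 0)"
    using o u by (intro sum.cong refl) (auto simp: orthonormal_on_def)
  also have "\<dots> = finner J u x" using o u by (simp add: orthonormal_on_def sum.delta')
  finally show ?thesis by (simp add: finner_diff_right)
qed

lemma finner_span_orth_residual: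
  assumes o: "orthonormal_on J U" and v: "v \<in> fvs.span U"
  shows "finner J v (x - orth_proj J U x) = 0"
proof -
  have "v = orth_proj J U v" using orth_proj_fix_span[OF o v] by simp
  hence "finner J v (x - orth_proj J U x) = cnj (finner J (x - orth_proj J U x) (orth_proj J U v))"
    by (metis cnj_finner)
  also have "finner J (x - orth_proj J U x) (orth_proj J U v)
      = (\<Sum>w\<in>U. finner J w v * finner J (x - orth_proj J U x) w)"
    unfolding orth_proj_def by (rule finner_sum_right)
  also have "\<dots> = 0"
    using finner_orth_proj_residual[OF o]
    by (intro sum.neutral) (metis complex_cnj_zero cnj_finner mult_zero_right)
  finally show ?thesis by (simp only: complex_cnj_zero)
qed

lemma supported_on_orth_proj: "orthonormal_on J U \<Longrightarrow> supported_on J (orth_proj J U x)"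
  by (auto simp: supported_on_def orth_proj_def orthonormal_on_def intro!: sum.neutral)

lemma finner_self_pos:
  assumes f: "finite J" and s: "supported_on J w" and w: "w \<noteq> 0"
  shows "0 < Re (finner J w w)"
proof -
  obtain j where j: "w j \<noteq> 0" using w by (auto simp: fun_eq_iff)
  hence jJ: "j \<in> J" using s by (auto simp: supported_on_def)
  have "Re (finner J w w) = (\<Sum>i\<in>J. (cmod (w i))\<^sup>2)" by (simp add: finner_def cnj_mult_self)
  also have "\<dots> \<ge> (cmod (w j))\<^sup>2"
    using f jJ by (intro member_le_sum) auto
  finally show ?thesis using j by (smt (verit) zero_less_power2 norm_eq_zero)
qed

lemma orthonormal_on_insert:
  assumes fJ: "finite J" and o: "orthonormal_on J U" and sw: "supported_on J w" and w: "w \<noteq> 0"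
    and orth: "\<forall>u\<in>U. finner J u w = 0"
  defines "u0 \<equiv> fscale (complex_of_real (1 / sqrt (Re (finner J w w)))) w"
  shows "orthonormal_on J (insert u0 U)"
proof -
  define n where "n = Re (finner J w w)"
  have n0: "0 < n" using finner_self_pos[OF fJ sw w] by (simp add: n_def)
  have gww: "finner J w w = complex_of_real n"
    by (simp add: n_def finner_def cnj_mult_self complex_eq_iff)
  have orth0: "finner J u u0 = 0" if "u \<in> U" for u
    using orth that by (simp add: u0_def finner_scale_right)
  have orth0': "finner J u0 u = 0" if "u \<in> U" for u
    using orth0[OF that] by (metis complex_cnj_zero cnj_finner)
  have "finner J u0 u0 = complex_of_real (1 / sqrt n) * complex_of_real (1 / sqrt n) * finner J w w"
    by (simp add: u0_def n_def finner_scale_left finner_scale_right)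
  also have "\<dots> = 1" using n0 by (simp add: gww field_simps flip: of_real_mult)
  finally have n1: "finner J u0 u0 = 1" .
  have "u0 \<notin> U" using orth0 n1 by force
  moreover have "supported_on J u0" using sw by (simp add: supported_on_def u0_def fscale_def)
  ultimately show ?thesis using o orth0 orth0' n1 unfolding orthonormal_on_def by auto
qed

lemma span_insert_scaled_residual:
  assumes "y \<in> fvs.span U" and "c \<noteq> 0"
  shows "fvs.span (insert (fscale c (v - y)) U) = fvs.span (insert v U)"
  unfolding fvs.span_eq
proof (intro conjI)
  have "y \<in> fvs.span (insert v U)" using assms(1) fvs.span_mono[of U "insert v U"] by auto
  hence "fscale c (v - y) \<in> fvs.span (insert v U)"
    by (intro fvs.span_scale fvs.span_diff) (auto intro: fvs.span_base)
  thus "insert (fscale c (v - y)) U \<subseteq> fvs.span (insert v U)" by (auto intro: fvs.span_base)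
  have "v = fscale (inverse c) (fscale c (v - y)) + y" using assms(2) by (simp add: fscale_def fun_eq_iff field_simps)
  moreover have "y \<in> fvs.span (insert (fscale c (v - y)) U)"
    using assms(1) fvs.span_mono[of U "insert (fscale c (v - y)) U"] by auto
  ultimately have "v \<in> fvs.span (insert (fscale c (v - y)) U)"
    by (metis fvs.span_add fvs.span_base fvs.span_scale insertI1)
  thus "insert v U \<subseteq> fvs.span (insert (fscale c (v - y)) U)" by (auto intro: fvs.span_base)
qed

lemma gram_schmidt:
  assumes fJ: "finite J"
  shows "finite S \<Longrightarrow> (\<forall>v\<in>S. supported_on J v) \<Longrightarrow> \<exists>U. orthonormal_on J U \<and> fvs.span U = fvs.span S"
proof (induction S rule: finite_induct)
  case empty
  show ?case by (intro exI[of _ "{}"]) (simp add: orthonormal_on_def)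
next
  case (insert v S)
  then obtain U where o: "orthonormal_on J U" and sp: "fvs.span U = fvs.span S" by auto
  have span_insert: "fvs.span (insert v U) = fvs.span (insert v S)"
    by (simp add: fvs.span_insert sp)
  define w where "w = v - orth_proj J U v"
  show ?case
  proof (cases "w = 0")
    case True
    hence "v \<in> fvs.span U" using orth_proj_in_span[of J U v] by (simp add: w_def)
    thus ?thesis using o span_insert by (metis fvs.span_redundant)
  next
    case False
    define n where "n = Re (finner J w w)"
    define u0 where "u0 = fscale (complex_of_real (1 / sqrt n)) w"
    have sw: "supported_on J w"
      using insert.prems supported_on_orth_proj[OF o, of v] by (auto simp: supported_on_def w_def)
    have "orthonormal_on J (insert u0 U)"
      unfolding u0_def n_def
      by (rule orthonormal_on_insert[OF fJ o sw False])
        (use finner_orth_proj_residual[OF o] in \<open>simp add: w_def\<close>)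
    moreover have "0 < n" using finner_self_pos[OF fJ sw False] by (simp add: n_def)
    hence "fvs.span (insert u0 U) = fvs.span (insert v U)"
      unfolding u0_def w_def by (intro span_insert_scaled_residual orth_proj_in_span) simp
    ultimately show ?thesis using span_insert by auto
  qed
qed

lemma exists_separating_vector:
  assumes fJ: "finite J" and fS: "finite S" and sS: "\<forall>v\<in>S. supported_on J v" and sx: "supported_on J x"
    and nx: "x \<notin> fvs.span S"
  shows "\<exists>m. (\<forall>v\<in>S. finner J m v = 0) \<and> finner J m x \<noteq> 0"
proof -
  obtain U where o: "orthonormal_on J U" and sp: "fvs.span U = fvs.span S" using gram_schmidt[OF fJ fS sS] by blast
  define m where "m = x - orth_proj J U x"
  have m0: "m \<noteq> 0" using nx orth_proj_in_span[of J U x] sp by (auto simp: m_def)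
  have sm: "supported_on J m" using sx supported_on_orth_proj[OF o, of x] by (auto simp: supported_on_def m_def)
  have orth: "finner J m v = 0" if "v \<in> fvs.span S" for v
  proof -
    have "finner J v m = 0" unfolding m_def by (rule finner_span_orth_residual[OF o]) (use that sp in simp)
    thus ?thesis by (metis complex_cnj_zero cnj_finner)
  qed
  have "finner J m x = finner J m m + finner J m (orth_proj J U x)"
    by (simp add: m_def finner_add_right[symmetric])
  also have "finner J m (orth_proj J U x) = 0" using orth orth_proj_in_span[of J U x] sp by auto
  finally have "finner J m x = finner J m m" by simp
  moreover have "0 < Re (finner J m m)" by (rule finner_self_pos[OF fJ sm m0])
  ultimately have "finner J m x \<noteq> 0" by auto
  moreover have "\<forall>v\<in>S. finner J m v = 0" using orth fvs.span_superset by blast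
  ultimately show ?thesis by blast
qed

section \<open>Spans of Kraus operators\<close>

definition qscale :: "complex \<Rightarrow> qop \<Rightarrow> qop" where
  "qscale c A = (\<lambda>s t. c * A s t)"

interpretation qvs: vector_space qscale
  by unfold_locales (auto simp: qscale_def fun_eq_iff algebra_simps)

lemma sum_qscale: "(\<Sum>a\<in>T. qscale (r a) a) = (\<lambda>s t. \<Sum>a\<in>T. r a * a s t)"
  by (simp add: fun_eq_iff sum_map_apply qscale_def)

lemma cspan_eq: "cspan S = qvs.span S"
  unfolding cspan_def qvs.span_explicit sum_qscale by blast

definition frob_inner :: "nat set \<Rightarrow> qop \<Rightarrow> qop \<Rightarrow> complex" where
  "frob_inner V M K = (\<Sum>a\<in>asg V. \<Sum>b\<in>asg V. cnj (M a b) * K a b)"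

lemma clip_image_op_on: "\<forall>K\<in>S. op_on V K \<Longrightarrow> clip V ` S = S"
  by (force simp: clip_op_on)

lemma cspan_if_vectorised_span:
  assumes "(\<lambda>(s, u). clip V L s u) \<in> fvs.span ((\<lambda>A (s, u). clip V A s u) ` S)"
  shows "clip V L \<in> cspan (clip V ` S)"
proof -
  obtain t r where t: "finite t" "t \<subseteq> (\<lambda>A (s, u). clip V A s u) ` S"
    and xs: "(\<lambda>(s, u). clip V L s u) = (\<Sum>a\<in>t. fscale (r a) a)"
    using assms unfolding fvs.span_explicit by blast
  define F where "F = curry ` t"
  have inj: "inj_on curry t" by (rule inj_onI) (metis case_prod_curry)
  have "clip V L s u = (\<Sum>K\<in>F. r (case_prod K) * K s u)" for s u
  proof -
    have "clip V L s u = (\<Sum>a\<in>t. r a * curry a s u)"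
      using fun_cong[OF xs, of "(s, u)"] by (simp add: sum_map_apply fscale_def)
    also have "\<dots> = (\<Sum>K\<in>F. r (case_prod K) * K s u)"
      unfolding F_def by (subst sum.reindex[OF inj]) simp
    finally show ?thesis .
  qed
  moreover have "finite F" "F \<subseteq> clip V ` S" using t by (auto simp: F_def)
  ultimately show ?thesis
    unfolding cspan_def by (intro CollectI exI[of _ F] exI[of _ "\<lambda>K. r (case_prod K)"]) auto
qed

lemma exists_separating_op:
  assumes fV: "finite V" and fS: "finite S" and opS: "\<forall>K\<in>S. op_on V K" and opL: "op_on V L"
    and nL: "L \<notin> cspan S"
  shows "\<exists>M. (\<forall>K\<in>S. frob_inner V M K = 0) \<and> frob_inner V M L \<noteq> 0"
proof -
  define J where "J = asg V \<times> asg V"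
  define vec where "vec = (\<lambda>A (s, u). clip V A s u)"
  have fJ: "finite J" using fV by (simp add: J_def finite_asg)
  have supp: "supported_on J (vec A)" for A by (auto simp: supported_on_def J_def clip_def vec_def)
  have finner_vec: "finner J m (vec A) = frob_inner V (curry m) A" for m A
  proof -
    have "finner J m (vec A) = (\<Sum>(a,b)\<in>asg V \<times> asg V. cnj (m (a,b)) * A a b)"
      unfolding finner_def J_def vec_def by (intro sum.cong refl) (auto simp: clip_def)
    also have "\<dots> = frob_inner V (curry m) A" by (simp add: frob_inner_def sum.cartesian_product)
    finally show ?thesis .
  qed
  have "vec L \<notin> fvs.span (vec ` S)"
    using cspan_if_vectorised_span[of V L S] nL clip_image_op_on[OF opS] clip_op_on[OF opL]
    unfolding vec_def by auto
  then obtain m where m1: "\<forall>v\<in>vec ` S. finner J m v = 0" and m2: "finner J m (vec L) \<noteq> 0"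
    using exists_separating_vector[OF fJ _ _ supp] fS supp by blast
  show ?thesis
    using m1 m2 finner_vec by (intro exI[of _ "curry m"]) auto
qed

definition matrix_unit :: "asgn \<Rightarrow> asgn \<Rightarrow> qop" where
  "matrix_unit b d = (\<lambda>x y. if x = b \<and> y = d then 1 else 0)"

lemma kraus_matrix_unit:
  assumes fV: "finite V" and k: "is_kraus V G Ks" and a: "a \<in> asg V" and b: "b \<in> asg V"
    and c: "c \<in> asg V" and d: "d \<in> asg V"
  shows "G (matrix_unit b d) a c = (\<Sum>K\<leftarrow>Ks. K a b * cnj (K c d))"
proof -
  have "G (matrix_unit b d) a c = (\<Sum>K\<leftarrow>Ks. mmul V (mmul V K (matrix_unit b d)) (adj K) a c)"
    using k a c by (simp add: is_kraus_def)
  also have "\<dots> = (\<Sum>K\<leftarrow>Ks. K a b * cnj (K c d))"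
  proof (rule arg_cong[where f = sum_list], rule map_cong[OF refl])
    fix K
    have m1: "mmul V K (matrix_unit b d) a w = (if w = d then K a b else 0)" for w
    proof -
      have "mmul V K (matrix_unit b d) a w = (\<Sum>u\<in>asg V. if u = b then (if w = d then K a b else 0) else 0)"
        unfolding mmul_def matrix_unit_def by (intro sum.cong refl) auto
      also have "\<dots> = (if w = d then K a b else 0)" using b fV by (simp add: sum.delta' finite_asg)
      finally show ?thesis .
    qed
    have "mmul V (mmul V K (matrix_unit b d)) (adj K) a c = (\<Sum>w\<in>asg V. if w = d then K a b * cnj (K c d) else 0)"
      unfolding mmul_def[of V "mmul V K (matrix_unit b d)"] m1 adj_def by (intro sum.cong refl) auto
    also have "\<dots> = K a b * cnj (K c d)" using d fV by (simp add: sum.delta' finite_asg)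
    finally show "mmul V (mmul V K (matrix_unit b d)) (adj K) a c = K a b * cnj (K c d)" .
  qed
  finally show ?thesis .
qed

lemma sum_frob_inner_kraus:
  assumes fV: "finite V" and k: "is_kraus V G Ks"
  shows "(\<Sum>K\<leftarrow>Ks. frob_inner V M K * cnj (frob_inner V M K)) =
    (\<Sum>a\<in>asg V. \<Sum>c\<in>asg V. \<Sum>b\<in>asg V. \<Sum>d\<in>asg V. cnj (M a b) * M c d * G (matrix_unit b d) a c)"
proof -
  have e: "frob_inner V M K * cnj (frob_inner V M K) =
     (\<Sum>a\<in>asg V. \<Sum>c\<in>asg V. \<Sum>b\<in>asg V. \<Sum>d\<in>asg V. cnj (M a b) * M c d * (K a b * cnj (K c d)))" for K
  proof -
    have "frob_inner V M K * cnj (frob_inner V M K) = (\<Sum>a\<in>asg V. \<Sum>b\<in>asg V. cnj (M a b) * K a b) * (\<Sum>c\<in>asg V. \<Sum>d\<in>asg V. M c d * cnj (K c d))"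
      by (simp add: frob_inner_def cnj_sum)
    also have "\<dots> = (\<Sum>a\<in>asg V. \<Sum>c\<in>asg V. (\<Sum>b\<in>asg V. cnj (M a b) * K a b) * (\<Sum>d\<in>asg V. M c d * cnj (K c d)))"
      by (rule sum_product)
    also have "\<dots> = (\<Sum>a\<in>asg V. \<Sum>c\<in>asg V. \<Sum>b\<in>asg V. \<Sum>d\<in>asg V. (cnj (M a b) * K a b) * (M c d * cnj (K c d)))"
      by (simp only: sum_product)
    finally show ?thesis by (simp add: mult_ac)
  qed
  have "(\<Sum>K\<leftarrow>Ks. frob_inner V M K * cnj (frob_inner V M K)) =
     (\<Sum>K\<leftarrow>Ks. \<Sum>a\<in>asg V. \<Sum>c\<in>asg V. \<Sum>b\<in>asg V. \<Sum>d\<in>asg V. cnj (M a b) * M c d * (K a b * cnj (K c d)))"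
    by (simp only: e)
  also have "\<dots> = (\<Sum>a\<in>asg V. \<Sum>c\<in>asg V. \<Sum>b\<in>asg V. \<Sum>d\<in>asg V. cnj (M a b) * M c d * (\<Sum>K\<leftarrow>Ks. K a b * cnj (K c d)))"
    by (simp only: sum_sum_list_swap[symmetric] sum_list_const_mult)
  also have "\<dots> = (\<Sum>a\<in>asg V. \<Sum>c\<in>asg V. \<Sum>b\<in>asg V. \<Sum>d\<in>asg V. cnj (M a b) * M c d * G (matrix_unit b d) a c)"
    by (intro sum.cong refl) (simp add: kraus_matrix_unit[OF fV k])
  finally show ?thesis .
qed

lemma cspan_kraus_subset:
  assumes fV: "finite V" and k1: "kraus_on V G K1" and k2: "kraus_on V G K2"
  shows "cspan (set K2) \<subseteq> cspan (set K1)"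
proof -
  have "L \<in> cspan (set K1)" if L: "L \<in> set K2" for L
  proof (rule ccontr)
    assume "L \<notin> cspan (set K1)"
    moreover have "\<forall>K\<in>set K1. op_on V K" "op_on V L" using k1 k2 L by (auto simp: kraus_on_def)
    ultimately obtain M where M1: "\<forall>K\<in>set K1. frob_inner V M K = 0" and M2: "frob_inner V M L \<noteq> 0"
      using exists_separating_op[OF fV finite_set] by blast
    have "(\<Sum>K\<leftarrow>K2. frob_inner V M K * cnj (frob_inner V M K))
        = (\<Sum>K\<leftarrow>K1. frob_inner V M K * cnj (frob_inner V M K))"
      by (simp add: sum_frob_inner_kraus[OF fV is_kraus_if_kraus_on[OF k1]]
          sum_frob_inner_kraus[OF fV is_kraus_if_kraus_on[OF k2]])
    also have "\<dots> = 0" using M1 by (induction K1) auto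
    finally have z: "(\<Sum>K\<leftarrow>K2. frob_inner V M K * cnj (frob_inner V M K)) = 0" .
    have "(\<Sum>K\<leftarrow>K2. (cmod (frob_inner V M K))\<^sup>2) = Re (\<Sum>K\<leftarrow>K2. frob_inner V M K * cnj (frob_inner V M K))"
      by (simp add: Re_sum_list complex_norm_square[symmetric] mult.commute)
    hence "(\<Sum>K\<leftarrow>K2. (cmod (frob_inner V M K))\<^sup>2) = 0" using z by simp
    moreover have "(cmod (frob_inner V M L))\<^sup>2 \<le> (\<Sum>K\<leftarrow>K2. (cmod (frob_inner V M K))\<^sup>2)"
      using L by (intro member_le_sum_list) auto
    ultimately show False using M2 by simp
  qed
  thus ?thesis unfolding cspan_eq by (intro qvs.span_minimal) auto
qed

lemma kraus_span_eq:
  assumes fV: "finite V" and k: "kraus_on V G Ks"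
  shows "kraus_span V G = cspan (set Ks)"
proof -
  define K0 where "K0 = (SOME Ks. is_kraus V G Ks)"
  have "is_kraus V G K0"
    unfolding K0_def by (rule someI[where P = "is_kraus V G", OF is_kraus_if_kraus_on[OF k]])
  hence k0: "kraus_on V G (map (clip V) K0)" by (rule kraus_on_clip)
  have "kraus_span V G = cspan (set (map (clip V) K0))" by (simp add: kraus_span_def K0_def)
  thus ?thesis using cspan_kraus_subset[OF fV k k0] cspan_kraus_subset[OF fV k0 k] by auto
qed

lemma maps_range_cspan:
  assumes "\<forall>K\<in>S. maps_range X (lift_op V X K) A B" and "N \<in> cspan S"
  shows "maps_range X (lift_op V X N) A B"
proof -
  have "qvs.subspace {N. maps_range X (lift_op V X N) A B}"
    unfolding qvs.subspace_def maps_range_def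
    by (auto simp: lift_op_add mmul_add_left mmul_add_right qscale_def lift_op_scale
        mmul_scale_left mmul_scale_right fun_eq_iff)
  hence "qvs.span S \<subseteq> {N. maps_range X (lift_op V X N) A B}"
    using assms(1) by (intro qvs.span_minimal) auto
  thus ?thesis using assms(2) unfolding cspan_eq by blast
qed

section \<open>The termination space and its projector\<close>

lemma term_space_iff:
  assumes f: "finite V" and k: "kraus_on V E Es" and t: "trace_nonincreasing V E"
  shows "\<psi> \<in> term_space V E \<longleftrightarrow> vec_in V \<psi> \<and> (\<forall>s\<in>asg V. apply_op V (defect V Es) \<psi> s = 0)"
proof -
  have qf: "qinner V \<psi> (apply_op V (defect V Es) \<psi>) = qtrace V (outer \<psi> \<psi>) - qtrace V (E (outer \<psi> \<psi>))"
    by (rule qinner_defect[OF f k])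
  show ?thesis
  proof
    assume a: "\<psi> \<in> term_space V E"
    hence "Re (qinner V \<psi> (apply_op V (defect V Es) \<psi>)) \<le> 0" using qf by (simp add: term_space_def)
    thus "vec_in V \<psi> \<and> (\<forall>s\<in>asg V. apply_op V (defect V Es) \<psi> s = 0)"
      using psd_kernel[OF f adj_defect qinner_defect_nonneg[OF f k t]] a by (simp add: term_space_def)
  next
    assume "vec_in V \<psi> \<and> (\<forall>s\<in>asg V. apply_op V (defect V Es) \<psi> s = 0)"
    thus "\<psi> \<in> term_space V E" using qf by (simp add: term_space_def qinner_def)
  qed
qed

lemma mmul_proj_fixed:
  assumes fV: "finite V" and p1: "is_proj V P1" and p2: "is_proj V P2"
    and fixed: "\<And>\<psi>. vec_in V \<psi> \<Longrightarrow> apply_op V P2 \<psi> = \<psi> \<Longrightarrow> apply_op V P1 \<psi> = \<psi>"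
  shows "mmul V P1 P2 = P2"
proof -
  have "mmul V (P1 - idop V) P2 = 0"
  proof (rule mmul_proj_eq_0I[OF fV p2])
    show "op_on V (P1 - idop V)" using p1 by (simp add: is_proj_def)
    fix \<psi> s assume a: "apply_op V P2 \<psi> = \<psi>" and s: "s \<in> asg V"
    have "vec_in V \<psi>" using vec_in_apply[of V P2 \<psi>] p2 a by (simp add: is_proj_def)
    hence "apply_op V P1 \<psi> = \<psi>" using fixed a by blast
    thus "apply_op V (P1 - idop V) \<psi> s = 0" using s fV by (simp add: apply_diff apply_idop)
  qed
  thus ?thesis using p1 p2 fV by (simp add: mmul_diff_left mmul_idop_left is_proj_def)
qed

lemma proj_eqI:
  assumes fV: "finite V" and p1: "is_proj V P1" and p2: "is_proj V P2"
    and fixed: "\<And>\<psi>. vec_in V \<psi> \<Longrightarrow> apply_op V P1 \<psi> = \<psi> \<longleftrightarrow> apply_op V P2 \<psi> = \<psi>"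
  shows "P1 = P2"
proof -
  have a: "mmul V P1 P2 = P2" using mmul_proj_fixed[OF fV p1 p2] fixed by blast
  have b: "mmul V P2 P1 = P1" using mmul_proj_fixed[OF fV p2 p1] fixed by blast
  have "P2 = adj (mmul V P1 P2)" using a p2 by (simp add: is_proj_def)
  also have "\<dots> = mmul V P2 P1" using p1 p2 by (simp add: adj_mmul is_proj_def)
  finally show ?thesis using b by simp
qed

lemma vec_in_iff_supported_on: "vec_in V \<psi> \<longleftrightarrow> supported_on (asg V) \<psi>"
  by (simp add: vec_in_def supported_on_def)

lemma exists_finite_spanning_subset:
  assumes fV: "finite V" and sub: "fvs.subspace S" and S: "\<forall>\<psi>\<in>S. vec_in V \<psi>"
  shows "\<exists>B. finite B \<and> B \<subseteq> S \<and> fvs.span B = S"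
proof -
  define e where "e = (\<lambda>s::asgn. \<lambda>u::asgn. if u = s then (1::complex) else 0)"
  have "S \<subseteq> fvs.span (e ` asg V)"
  proof
    fix \<psi> assume "\<psi> \<in> S"
    hence vi: "vec_in V \<psi>" using S by blast
    have "(\<Sum>s\<in>asg V. fscale (\<psi> s) (e s)) u = \<psi> u" for u
      using vi fV by (simp add: sum_map_apply fscale_def e_def vec_in_def if_distrib finite_asg
          cong: if_cong)
    hence "\<psi> = (\<Sum>s\<in>asg V. fscale (\<psi> s) (e s))" by auto
    also have "\<dots> \<in> fvs.span (e ` asg V)"
      by (intro fvs.span_sum fvs.span_scale fvs.span_base) auto
    finally show "\<psi> \<in> fvs.span (e ` asg V)" .
  qed
  moreover obtain B where B: "B \<subseteq> S" "fvs.independent B" "S \<subseteq> fvs.span B"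
    using fvs.maximal_independent_subset by blast
  ultimately have "finite B"
    using fvs.independent_span_bound[OF _ B(2)] fV finite_asg by blast
  moreover have "fvs.span B = S" using B sub fvs.span_minimal by blast
  ultimately show ?thesis using B(1) by blast
qed

definition proj_op :: "nat set \<Rightarrow> qvec set \<Rightarrow> qop" where
  "proj_op V U = clip V (\<lambda>s t. \<Sum>u\<in>U. u s * cnj (u t))"

lemma apply_proj_op:
  assumes o: "orthonormal_on (asg V) U"
  shows "apply_op V (proj_op V U) \<psi> = orth_proj (asg V) U \<psi>"
proof (rule ext)
  fix s
  show "apply_op V (proj_op V U) \<psi> s = orth_proj (asg V) U \<psi> s"
  proof (cases "s \<in> asg V")
    case True
    have "apply_op V (proj_op V U) \<psi> s = (\<Sum>t\<in>asg V. \<Sum>u\<in>U. u s * cnj (u t) * \<psi> t)"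
      unfolding apply_op_def proj_op_def using True
      by (intro sum.cong refl) (auto simp: clip_def sum_distrib_right)
    also have "\<dots> = (\<Sum>u\<in>U. \<Sum>t\<in>asg V. u s * cnj (u t) * \<psi> t)" by (rule sum.swap)
    also have "\<dots> = orth_proj (asg V) U \<psi> s"
      by (simp add: orth_proj_def finner_def sum_distrib_left sum_distrib_right mult_ac)
    finally show ?thesis .
  next
    case False
    thus ?thesis using o
      by (auto simp: apply_op_def proj_op_def clip_def orth_proj_def orthonormal_on_def
          supported_on_def intro!: sum.neutral)
  qed
qed

lemma is_proj_proj_op:
  assumes fV: "finite V" and o: "orthonormal_on (asg V) U"
  shows "is_proj V (proj_op V U)"
proof -
  define e where "e = (\<lambda>t::asgn. \<lambda>u::asgn. if u = t then (1::complex) else 0)"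
  have col: "(\<lambda>w. proj_op V U w t) = orth_proj (asg V) U (e t)" if t: "t \<in> asg V" for t
  proof -
    have "apply_op V (proj_op V U) (e t) w = proj_op V U w t" for w
    proof -
      have "apply_op V (proj_op V U) (e t) w = (\<Sum>t'\<in>asg V. if t' = t then proj_op V U w t' else 0)"
        unfolding apply_op_def e_def by (intro sum.cong refl) auto
      thus ?thesis using t fV by (simp add: sum_asg_delta)
    qed
    thus ?thesis using apply_proj_op[OF o] by (metis ext)
  qed
  have "mmul V (proj_op V U) (proj_op V U) s t = proj_op V U s t" for s t
  proof (cases "t \<in> asg V")
    case True
    have "mmul V (proj_op V U) (proj_op V U) s t = apply_op V (proj_op V U) (\<lambda>w. proj_op V U w t) s"
      by (simp add: mmul_def apply_op_def)
    also have "\<dots> = orth_proj (asg V) U (orth_proj (asg V) U (e t)) s"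
      using col[OF True] apply_proj_op[OF o] by simp
    also have "\<dots> = proj_op V U s t" using orth_proj_idem[OF o] col[OF True] by metis
    finally show ?thesis .
  next
    case False
    thus ?thesis by (simp add: mmul_def proj_op_def clip_def)
  qed
  moreover have "adj (proj_op V U) = proj_op V U"
    by (auto simp: adj_def proj_op_def clip_def fun_eq_iff mult.commute)
  ultimately show ?thesis by (simp add: is_proj_def proj_op_def fun_eq_iff)
qed

lemma exists_proj_onto:
  assumes fV: "finite V" and sub: "fvs.subspace S" and S: "\<forall>\<psi>\<in>S. vec_in V \<psi>"
  shows "\<exists>P. is_proj V P \<and> (\<forall>\<psi>. vec_in V \<psi> \<longrightarrow> apply_op V P \<psi> = \<psi> \<longleftrightarrow> \<psi> \<in> S)"
proof -
  obtain B where B: "finite B" "B \<subseteq> S" "fvs.span B = S"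
    using exists_finite_spanning_subset[OF assms] by blast
  moreover have "\<forall>v\<in>B. supported_on (asg V) v" using B(2) S vec_in_iff_supported_on by blast
  ultimately obtain U where o: "orthonormal_on (asg V) U" and U: "fvs.span U = S"
    using gram_schmidt[OF finite_asg[OF fV]] by metis
  have "apply_op V (proj_op V U) \<psi> = \<psi> \<longleftrightarrow> \<psi> \<in> S" for \<psi>
    using apply_proj_op[OF o] orth_proj_in_span[of "asg V" U \<psi>] orth_proj_fix_span[OF o] U by metis
  thus ?thesis using is_proj_proj_op[OF fV o] by blast
qed

lemma term_proj:
  assumes fV: "finite V" and k: "kraus_on V E Es" and t: "trace_nonincreasing V E"
  shows "is_proj V (term_proj V E)"
    and "vec_in V \<psi> \<Longrightarrow> apply_op V (term_proj V E) \<psi> = \<psi> \<longleftrightarrow> \<psi> \<in> term_space V E"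
proof -
  note TE = term_space_iff[OF fV k t]
  have "fvs.subspace (term_space V E)"
    unfolding fvs.subspace_def
  proof (intro conjI ballI allI)
    show "0 \<in> term_space V E" unfolding TE by (simp add: vec_in_def apply_op_def)
    fix x y assume "x \<in> term_space V E" "y \<in> term_space V E"
    thus "x + y \<in> term_space V E" unfolding TE by (simp add: vec_in_def apply_add)
  next
    fix c and x :: qvec assume "x \<in> term_space V E"
    thus "fscale c x \<in> term_space V E" unfolding TE fscale_def by (simp add: vec_in_def apply_scale)
  qed
  then obtain P where P: "is_proj V P"
    and fixed: "\<And>\<psi>. vec_in V \<psi> \<Longrightarrow> apply_op V P \<psi> = \<psi> \<longleftrightarrow> \<psi> \<in> term_space V E"
    using exists_proj_onto[OF fV] TE by blast
  have "term_proj V E = P"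
    unfolding term_proj_def
  proof (rule the_equality)
    show "P = clip V P \<and> projector V P \<and> {\<psi>. vec_in V \<psi> \<and> apply_op V P \<psi> = \<psi>} = term_space V E"
      using P fixed TE by (auto simp: is_proj_def clip_op_on is_proj_projector)
    fix P' assume a: "P' = clip V P' \<and> projector V P' \<and> {\<psi>. vec_in V \<psi> \<and> apply_op V P' \<psi> = \<psi>} = term_space V E"
    hence "is_proj V P'" using is_proj_clip[of V P'] by metis
    thus "P' = P" using a fixed by (intro proj_eqI[OF fV _ P]) auto
  qed
  thus "is_proj V (term_proj V E)" and "vec_in V \<psi> \<Longrightarrow> apply_op V (term_proj V E) \<psi> = \<psi> \<longleftrightarrow> \<psi> \<in> term_space V E"
    using P fixed by auto
qed

section \<open>Separating triples on a doubled system\<close>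

text \<open>The doubled system adjoins to \<open>V\<close> the disjoint copy \<open>V + shift V\<close>, so that an operator
  \<open>B\<close> on \<open>H\<^sub>V\<close> becomes the vector \<open>vec_of V B\<close> with entries \<open>B a b\<close> (the copy carrying \<open>b\<close>),
  and the Frobenius inner product becomes the ordinary one.\<close>

definition shift :: "nat set \<Rightarrow> nat" where
  "shift V = Suc (Max (insert 0 V))"

definition doubled :: "nat set \<Rightarrow> nat set" where
  "doubled V = V \<union> (\<lambda>q. q + shift V) ` V"

definition copy_part :: "nat set \<Rightarrow> asgn \<Rightarrow> asgn" where
  "copy_part V s = (\<lambda>q. q \<in> V \<and> s (q + shift V))"

definition join :: "nat set \<Rightarrow> asgn \<Rightarrow> asgn \<Rightarrow> asgn" where
  "join V a b = (\<lambda>q. if q \<in> V then a q else (shift V \<le> q \<and> b (q - shift V)))"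

definition vec_of :: "nat set \<Rightarrow> qop \<Rightarrow> qvec" where
  "vec_of V B = (\<lambda>s. if s \<in> asg (doubled V) then B (restr V s) (copy_part V s) else 0)"

lemma lt_shift: "finite V \<Longrightarrow> q \<in> V \<Longrightarrow> q < shift V"
  unfolding shift_def by (simp add: le_imp_less_Suc)

lemma finite_doubled: "finite V \<Longrightarrow> finite (doubled V)" by (simp add: doubled_def)

lemma subset_doubled: "V \<subseteq> doubled V" by (simp add: doubled_def)

lemma copy_part_asg[simp]: "copy_part V s \<in> asg V" by (auto simp: copy_part_def asg_def)

lemma join_asg:
  assumes "b \<in> asg V"
  shows "join V a b \<in> asg (doubled V)"
  unfolding asg_def
proof (intro CollectI allI impI)
  fix q assume q: "q \<notin> doubled V"
  have "\<not> (shift V \<le> q \<and> b (q - shift V))"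
  proof
    assume a: "shift V \<le> q \<and> b (q - shift V)"
    hence "q - shift V \<in> V" using assms by (auto simp: asg_def)
    moreover have "q = (q - shift V) + shift V" using a by simp
    ultimately show False using q unfolding doubled_def by blast
  qed
  thus "\<not> join V a b q" using q by (simp add: join_def doubled_def)
qed

lemma restr_join: "a \<in> asg V \<Longrightarrow> restr V (join V a b) = a"
  by (auto simp: restr_def join_def asg_def fun_eq_iff)

lemma shift_notin: "finite V \<Longrightarrow> q + shift V \<notin> V"
  using lt_shift by (metis add_lessD1 less_irrefl_nat add.commute)

lemma copy_part_join: "finite V \<Longrightarrow> b \<in> asg V \<Longrightarrow> copy_part V (join V a b) = b"
  by (auto simp: copy_part_def join_def asg_def fun_eq_iff shift_notin)

lemma join_restr_copy_part:
  assumes "s \<in> asg (doubled V)"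
  shows "join V (restr V s) (copy_part V s) = s"
proof (rule ext)
  fix q
  have "s q \<Longrightarrow> q \<notin> V \<Longrightarrow> shift V \<le> q \<and> q - shift V \<in> V"
    using assms by (auto simp: asg_def doubled_def)
  thus "join V (restr V s) (copy_part V s) q = s q"
    by (auto simp: join_def restr_def copy_part_def)
qed

lemma bij_betw_split_doubled:
  assumes "finite V"
  shows "bij_betw (\<lambda>s. (restr V s, copy_part V s)) (asg (doubled V)) (asg V \<times> asg V)"
  by (rule bij_betwI[where g = "\<lambda>(a, b). join V a b"])
    (use assms in \<open>auto simp: join_asg join_restr_copy_part restr_join copy_part_join\<close>)

lemma qinner_vec_of:
  assumes "finite V"
  shows "qinner (doubled V) (vec_of V M) (vec_of V B) = frob_inner V M B"
proof -
  have "qinner (doubled V) (vec_of V M) (vec_of V B)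
      = (\<Sum>s\<in>asg (doubled V). (\<lambda>(a, b). cnj (M a b) * B a b) (restr V s, copy_part V s))"
    by (simp add: qinner_def vec_of_def)
  also have "\<dots> = (\<Sum>p\<in>asg V \<times> asg V. (\<lambda>(a, b). cnj (M a b) * B a b) p)"
    by (rule sum.reindex_bij_betw[OF bij_betw_split_doubled[OF assms]])
  finally show ?thesis by (simp add: frob_inner_def sum.cartesian_product)
qed

lemma vec_of_join: "finite V \<Longrightarrow> a \<in> asg V \<Longrightarrow> b \<in> asg V \<Longrightarrow> vec_of V B (join V a b) = B a b"
  by (simp add: vec_of_def join_asg restr_join copy_part_join)

lemma copy_part_merge: "finite V \<Longrightarrow> copy_part V (merge V a s) = copy_part V s"
  by (auto simp: copy_part_def merge_def fun_eq_iff shift_notin)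

lemma apply_lift_op_vec_of:
  assumes f: "finite V"
  shows "apply_op (doubled V) (lift_op V (doubled V) A) (vec_of V B) = vec_of V (mmul V A B)"
proof (rule ext)
  fix s
  show "apply_op (doubled V) (lift_op V (doubled V) A) (vec_of V B) s = vec_of V (mmul V A B) s"
  proof (cases "s \<in> asg (doubled V)")
    case True
    have "apply_op (doubled V) (lift_op V (doubled V) A) (vec_of V B) s
        = apply_op V A (\<lambda>a. vec_of V B (merge V a s)) (restr V s)"
      by (rule apply_lift_op[OF finite_doubled[OF f] subset_doubled True])
    also have "\<dots> = (\<Sum>a\<in>asg V. A (restr V s) a * B a (copy_part V s))"
      unfolding apply_op_def using True f
      by (intro sum.cong refl) (simp add: vec_of_def merge_asg[OF subset_doubled] copy_part_merge)
    finally show ?thesis using True by (simp add: vec_of_def mmul_def)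
  next
    case False
    thus ?thesis by (simp add: apply_op_def vec_of_def lift_op_def clip_def)
  qed
qed

lemma vec_in_vec_of: "vec_in (doubled V) (vec_of V B)"
  by (simp add: vec_in_def vec_of_def)

definition rank1_proj :: "nat set \<Rightarrow> qvec \<Rightarrow> qop" where
  "rank1_proj X v = (\<lambda>s u. v s * cnj (v u) / complex_of_real (Re (qinner X v v)))"

lemma qinner_self_of_real: "qinner X v v = complex_of_real (Re (qinner X v v))"
  by (simp add: complex_eq_iff)

lemma is_proj_rank1_proj:
  assumes f: "finite X" and vi: "vec_in X v" and n: "0 < Re (qinner X v v)"
  shows "is_proj X (rank1_proj X v)"
proof -
  define nv where "nv = Re (qinner X v v)"
  have op_on: "op_on X (rank1_proj X v)" using vi by (auto simp: op_on_def rank1_proj_def vec_in_def)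
  have mm: "mmul X (rank1_proj X v) (rank1_proj X v) = rank1_proj X v"
  proof (rule ext, rule ext)
    fix s u
    have "mmul X (rank1_proj X v) (rank1_proj X v) s u = v s * cnj (v u) * qinner X v v / (complex_of_real nv * complex_of_real nv)"
      by (simp add: mmul_def rank1_proj_def qinner_def sum_distrib_left sum_distrib_right sum_divide_distrib nv_def mult_ac)
    also have "\<dots> = rank1_proj X v s u"
      using n by (subst qinner_self_of_real) (simp add: rank1_proj_def nv_def field_simps)
    finally show "mmul X (rank1_proj X v) (rank1_proj X v) s u = rank1_proj X v s u" .
  qed
  have ad: "adj (rank1_proj X v) = rank1_proj X v"
    by (auto simp: adj_def rank1_proj_def fun_eq_iff mult.commute)
  show ?thesis using op_on mm ad by (simp add: is_proj_def)
qed

lemma mmul_rank1_proj_right: "mmul X A (rank1_proj X v) = (\<lambda>s u. apply_op X A v s * cnj (v u) / complex_of_real (Re (qinner X v v)))"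
  by (simp add: fun_eq_iff mmul_def rank1_proj_def apply_op_def sum_distrib_right sum_distrib_left sum_divide_distrib mult_ac times_divide_eq_right)

lemma mmul_rank1_proj_left: "mmul X (rank1_proj X m) Y = (\<lambda>s u. m s * qinner X m (\<lambda>w. Y w u) / complex_of_real (Re (qinner X m m)))"
  by (simp add: fun_eq_iff mmul_def rank1_proj_def qinner_def sum_distrib_left sum_divide_distrib mult_ac)

lemma exists_nonzero_entry: "finite X \<Longrightarrow> 0 < Re (qinner X v v) \<Longrightarrow> \<exists>s\<in>asg X. v s \<noteq> 0"
proof (rule ccontr)
  assume "\<not> (\<exists>s\<in>asg X. v s \<noteq> 0)" and "0 < Re (qinner X v v)"
  hence "qinner X v v = 0" by (simp add: qinner_def)
  thus False using \<open>0 < Re (qinner X v v)\<close> by simp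
qed

lemma qinner_mult_const_right: "qinner X x (\<lambda>w. y w * c) = qinner X x y * c"
  by (simp add: qinner_def sum_distrib_right sum_distrib_left mult_ac)

lemma vec_of_null_entry:
  assumes "finite V" and "Re (qinner (doubled V) (vec_of V B) (vec_of V B)) \<le> 0"
    and "a \<in> asg V" and "b \<in> asg V"
  shows "B a b = 0"
  using qinner_self_eq_0[OF finite_doubled[OF assms(1)] assms(2) join_asg[OF assms(4), of a]]
    vec_of_join[OF assms(1,3,4), of B] by simp

lemma mmul_lift_op_rank1_proj:
  fixes T K :: qop
  assumes "finite V"
  defines "W \<equiv> doubled V" and "t \<equiv> vec_of V T"
  shows "mmul W (lift_op V W K) (rank1_proj W t)
    = (\<lambda>s u. vec_of V (mmul V K T) s * cnj (t u) / complex_of_real (Re (qinner W t t)))"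
  unfolding mmul_rank1_proj_right using apply_lift_op_vec_of[OF assms(1), of K T]
  by (simp add: W_def t_def)

text \<open>Since \<open>lift_op\<close> turns \<open>K\<close> into \<open>K \<otimes> I\<close> and \<open>vec_of T\<close> is the vectorisation of \<open>T\<close>,
  \<open>(K \<otimes> I) vec_of T = vec_of (K T)\<close>, and the rank-one projector onto \<open>vec_of M\<close> detects
  exactly the Frobenius component of \<open>K T\<close> along \<open>M\<close>.\<close>

lemma maps_range_rank1_proj_iff:
  fixes T M K :: qop
  assumes fV: "finite V"
  defines "W \<equiv> doubled V" and "t \<equiv> vec_of V T" and "m \<equiv> vec_of V M"
  assumes nt: "0 < Re (qinner W t t)" and nm: "0 < Re (qinner W m m)"
  shows "maps_range W (lift_op V W K) (rank1_proj W t) (idop W - rank1_proj W m)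
    \<longleftrightarrow> frob_inner V M (mmul V K T) = 0"
proof -
  have fW: "finite W" using fV by (simp add: W_def finite_doubled)
  have "mmul W (idop W - (idop W - rank1_proj W m)) (mmul W (lift_op V W K) (rank1_proj W t)) =
     (\<lambda>s u. m s * qinner W m (\<lambda>w. vec_of V (mmul V K T) w * (cnj (t u) / complex_of_real (Re (qinner W t t))))
        / complex_of_real (Re (qinner W m m)))"
    unfolding mmul_lift_op_rank1_proj[OF fV, of K T, folded W_def t_def] by (simp add: mmul_rank1_proj_left)
  also have "\<dots> = (\<lambda>s u. m s * (frob_inner V M (mmul V K T) * (cnj (t u) / complex_of_real (Re (qinner W t t))))
        / complex_of_real (Re (qinner W m m)))"
    by (simp only: qinner_mult_const_right m_def W_def qinner_vec_of[OF fV])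
  finally have form: "mmul W (idop W - (idop W - rank1_proj W m)) (mmul W (lift_op V W K) (rank1_proj W t)) =
     (\<lambda>s u. m s * (frob_inner V M (mmul V K T) * (cnj (t u) / complex_of_real (Re (qinner W t t))))
        / complex_of_real (Re (qinner W m m)))" .
  obtain s0 where s0: "s0 \<in> asg W" "m s0 \<noteq> 0" using exists_nonzero_entry[OF fW nm] by blast
  obtain u0 where u0: "u0 \<in> asg W" "t u0 \<noteq> 0" using exists_nonzero_entry[OF fW nt] by blast
  show ?thesis
  proof
    assume "maps_range W (lift_op V W K) (rank1_proj W t) (idop W - rank1_proj W m)"
    hence "mmul W (idop W - (idop W - rank1_proj W m)) (mmul W (lift_op V W K) (rank1_proj W t)) s0 u0 = 0"
      by (simp add: maps_range_def)
    thus "frob_inner V M (mmul V K T) = 0" unfolding form using s0 u0 nt nm by simp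
  next
    assume "frob_inner V M (mmul V K T) = 0"
    thus "maps_range W (lift_op V W K) (rank1_proj W t) (idop W - rank1_proj W m)"
      unfolding maps_range_def form by (simp add: fun_eq_iff)
  qed
qed

lemma exists_separating_triple:
  assumes fV: "finite V" and nz: "frob_inner V M (mmul V L T) \<noteq> 0"
  shows "\<exists>W P Q. finite W \<and> V \<subseteq> W \<and> is_proj W P \<and> is_proj W Q \<and>
     (\<forall>K. maps_range W (lift_op V W K) P Q \<longleftrightarrow> frob_inner V M (mmul V K T) = 0) \<and>
     (\<forall>D. mmul V D T = 0 \<longrightarrow> mmul W (lift_op V W D) P = 0)"
proof -
  define W where "W = doubled V"
  define t where "t = vec_of V T"
  define m where "m = vec_of V M"
  have fW: "finite W" using fV by (simp add: W_def finite_doubled)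
  have nt: "0 < Re (qinner W t t)"
  proof (rule ccontr)
    assume "\<not> 0 < Re (qinner W t t)"
    hence "T a b = 0" if "a \<in> asg V" "b \<in> asg V" for a b
      using vec_of_null_entry[OF fV _ that] by (simp add: W_def t_def)
    hence "frob_inner V M (mmul V L T) = 0" by (simp add: frob_inner_def mmul_def)
    thus False using nz by simp
  qed
  have nm: "0 < Re (qinner W m m)"
  proof (rule ccontr)
    assume "\<not> 0 < Re (qinner W m m)"
    hence "M a b = 0" if "a \<in> asg V" "b \<in> asg V" for a b
      using vec_of_null_entry[OF fV _ that] by (simp add: W_def m_def)
    hence "frob_inner V M (mmul V L T) = 0" by (simp add: frob_inner_def)
    thus False using nz by simp
  qed
  have P: "is_proj W (rank1_proj W t)" and R: "is_proj W (rank1_proj W m)"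
    using is_proj_rank1_proj[OF fW] nt nm by (simp_all add: t_def m_def W_def vec_in_vec_of)
  have "mmul W (lift_op V W D) (rank1_proj W t) = 0" if "mmul V D T = 0" for D
    using that mmul_lift_op_rank1_proj[OF fV, of D T] by (simp add: fun_eq_iff vec_of_def W_def t_def)
  thus ?thesis
    using fW P is_proj_compl[OF fW R] maps_range_rank1_proj_iff[OF fV, of T M] nt nm
    by (intro exI[of _ W] exI[of _ "rank1_proj W t"] exI[of _ "idop W - rank1_proj W m"])
      (simp add: W_def t_def m_def subset_doubled)
qed

section \<open>Characterising the refinement orders\<close>

lemma kraus_on_comp_proj_so:
  assumes k: "kraus_on V E Es" and T: "is_proj V T"
  shows "kraus_on V (E \<circ> proj_so V T) (map (\<lambda>K. mmul V K T) Es)"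
  unfolding kraus_on_def
proof (intro conjI allI ballI)
  fix A
  have "clip V ((E \<circ> proj_so V T) A) = (\<Sum>K\<leftarrow>Es. mmul V (mmul V K (mmul V (mmul V T A) T)) (adj K))"
    using k by (simp add: kraus_on_def proj_so_def)
  also have "\<dots> = (\<Sum>K\<leftarrow>map (\<lambda>K. mmul V K T) Es. mmul V (mmul V K A) (adj K))"
    using T by (simp add: o_def adj_mmul mmul_assoc is_proj_def)
  finally show "clip V ((E \<circ> proj_so V T) A) = (\<Sum>K\<leftarrow>map (\<lambda>K. mmul V K T) Es. mmul V (mmul V K A) (adj K))" .
qed (use k T in \<open>auto simp: kraus_on_def is_proj_def\<close>)

lemma defect_mmul_eq_0_iff:
  assumes fV: "finite V" and F: "kraus_on V F Fs" and tF: "trace_nonincreasing V F"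
    and T: "is_proj V T"
  shows "mmul V (defect V Fs) T = 0 \<longleftrightarrow>
    (\<forall>\<psi>. vec_in V \<psi> \<longrightarrow> apply_op V T \<psi> = \<psi> \<longrightarrow> \<psi> \<in> term_space V F)"
proof
  assume DT: "mmul V (defect V Fs) T = 0"
  show "\<forall>\<psi>. vec_in V \<psi> \<longrightarrow> apply_op V T \<psi> = \<psi> \<longrightarrow> \<psi> \<in> term_space V F"
  proof (intro allI impI)
    fix \<psi> assume "vec_in V \<psi>" and fixed: "apply_op V T \<psi> = \<psi>"
    moreover have "apply_op V (defect V Fs) \<psi> = apply_op V (mmul V (defect V Fs) T) \<psi>"
      using fixed by (simp add: apply_mmul)
    ultimately show "\<psi> \<in> term_space V F"
      using DT by (simp add: term_space_iff[OF fV F tF] apply_op_def)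
  qed
next
  assume fixed: "\<forall>\<psi>. vec_in V \<psi> \<longrightarrow> apply_op V T \<psi> = \<psi> \<longrightarrow> \<psi> \<in> term_space V F"
  show "mmul V (defect V Fs) T = 0"
  proof (rule mmul_proj_eq_0I[OF fV T op_on_defect[OF F]])
    fix \<psi> s assume "apply_op V T \<psi> = \<psi>" and "s \<in> asg V"
    moreover have "vec_in V \<psi>" using vec_in_apply[of V T \<psi>] T \<open>apply_op V T \<psi> = \<psi>\<close>
      by (simp add: is_proj_def)
    ultimately show "apply_op V (defect V Fs) \<psi> s = 0"
      using fixed by (simp add: term_space_iff[OF fV F tF])
  qed
qed

lemma term_space_subset_iff:
  assumes fV: "finite V" and E: "kraus_on V E Es" "trace_nonincreasing V E"
    and F: "kraus_on V F Fs" "trace_nonincreasing V F"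
  shows "term_space V E \<subseteq> term_space V F \<longleftrightarrow> mmul V (defect V Fs) (term_proj V E) = 0"
  using defect_mmul_eq_0_iff[OF fV F term_proj(1)[OF fV E]] term_proj(2)[OF fV E]
  by (auto simp: term_space_def)

text \<open>If every vector of \<open>H\<^sub>V\<close> killed by \<open>D\<close> is fixed by \<open>T\<close>, the same holds for the lifts
  to \<open>H\<^sub>X\<close>, slice by slice: fix the variables outside \<open>V\<close> and apply the hypothesis.\<close>

lemma lift_op_mmul_fixed:
  assumes f: "finite X" and VX: "V \<subseteq> X" and A: "is_proj X A"
    and ker: "\<And>\<psi>. vec_in V \<psi> \<Longrightarrow> (\<forall>s\<in>asg V. apply_op V D \<psi> s = 0) \<Longrightarrow> apply_op V T \<psi> = \<psi>"
    and DA: "mmul X (lift_op V X D) A = 0"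
  shows "mmul X (lift_op V X T) A = A"
proof -
  have "mmul X (lift_op V X T - idop X) A = 0"
  proof (rule mmul_proj_eq_0I[OF f A])
    fix \<psi> s assume fixed: "apply_op X A \<psi> = \<psi>" and s: "s \<in> asg X"
    define \<phi> where "\<phi> = (\<lambda>a. if a \<in> asg V then \<psi> (merge V a s) else 0)"
    have ap: "apply_op V N \<phi> = apply_op V N (\<lambda>a. \<psi> (merge V a s))" for N
      by (simp add: apply_op_def \<phi>_def)
    have "apply_op X (lift_op V X D) \<psi> = apply_op X (mmul X (lift_op V X D) A) \<psi>"
      using fixed by (simp add: apply_mmul)
    hence zero: "apply_op X (lift_op V X D) \<psi> (merge V a s) = 0" for a
      using DA by (simp add: apply_op_def)
    have "\<forall>a\<in>asg V. apply_op V D \<phi> a = 0"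
    proof
      fix a assume a: "a \<in> asg V"
      have "apply_op V D \<phi> a = apply_op X (lift_op V X D) \<psi> (merge V a s)"
        using apply_lift_op[OF f VX merge_asg[OF VX a s]] a by (simp add: ap)
      thus "apply_op V D \<phi> a = 0" using zero by simp
    qed
    hence "apply_op V T \<phi> = \<phi>" using ker by (simp add: vec_in_def \<phi>_def)
    hence "apply_op X (lift_op V X T) \<psi> s = \<psi> s"
      using apply_lift_op[OF f VX s] ap[of T] by (metis \<phi>_def restr_asg restr_merge merge_restr)
    thus "apply_op X (lift_op V X T - idop X) \<psi> s = 0" using s f by (simp add: apply_diff apply_idop)
  qed simp
  thus ?thesis using A f by (simp add: mmul_diff_left mmul_idop_left is_proj_def)
qed

lemma mmul_lift_op_fixed:
  assumes "finite X" and "V \<subseteq> X" and "mmul X (lift_op V X T) A = A"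
  shows "mmul X (lift_op V X (mmul V K T)) A = mmul X (lift_op V X K) A"
  using assms by (simp add: lift_op_mmul[symmetric] mmul_assoc)

lemma le_P_if_cspan_subset:
  assumes fV: "finite V" and E: "kraus_on V E Es" "trace_nonincreasing V E"
    and F: "kraus_on V F Fs" "trace_nonincreasing V F"
    and sub: "cspan (set Fs) \<subseteq> cspan (set Es)"
  shows "le_P V E F"
  unfolding le_P_def
proof (intro allI impI)
  fix W P Q assume "finite W" and P: "projector W P" and Q: "projector W Q"
    and sat: "sat_par V W E P Q"
  show "sat_par V W F P Q" unfolding sat_par_iff_par_on
  proof (intro allI impI)
    fix X assume X: "finite X" "V \<union> W \<subseteq> X"
    hence VX: "V \<subseteq> X" and WX: "W \<subseteq> X" by auto
    note iff = par_on_ext_so_iff[OF X(1) VX _ _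
        is_proj_lift_projector[OF X(1) WX P] is_proj_lift_projector[OF X(1) WX Q]]
    have "\<forall>K\<in>set Es. maps_range X (lift_op V X K) (lift_op W X P) (lift_op W X Q)"
      using sat X iff[OF E] by (simp add: sat_par_iff_par_on)
    moreover have "L \<in> cspan (set Es)" if "L \<in> set Fs" for L
      using sub that qvs.span_base[of L "set Fs"] by (auto simp: cspan_eq)
    ultimately have "\<forall>L\<in>set Fs. maps_range X (lift_op V X L) (lift_op W X P) (lift_op W X Q)"
      using maps_range_cspan by blast
    thus "par_on X (ext_so V F) (lift_op W X P) (lift_op W X Q)" using iff[OF F] by simp
  qed
qed

text \<open>A Kraus operator \<open>L\<close> of \<open>F\<close> outside the span of those of \<open>E\<close> is separated from them by
  some \<open>M\<close>; the separating triple for \<open>T = I\<close> then holds for \<open>E\<close> but not for \<open>F\<close>.\<close>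

lemma cspan_subset_if_le_P:
  assumes fV: "finite V" and E: "kraus_on V E Es" "trace_nonincreasing V E"
    and F: "kraus_on V F Fs" "trace_nonincreasing V F" and le: "le_P V E F"
  shows "cspan (set Fs) \<subseteq> cspan (set Es)"
proof -
  have "L \<in> cspan (set Es)" if L: "L \<in> set Fs" for L
  proof (rule ccontr)
    have opK: "\<And>K. K \<in> set Es \<Longrightarrow> op_on V K" and opL: "op_on V L"
      using E F L by (auto simp: kraus_on_def)
    assume "L \<notin> cspan (set Es)"
    then obtain M where M1: "\<forall>K\<in>set Es. frob_inner V M K = 0" and M2: "frob_inner V M L \<noteq> 0"
      using exists_separating_op[OF fV finite_set] opK opL by blast
    then obtain W P Q where W: "finite W" "V \<subseteq> W" and P: "is_proj W P" and Q: "is_proj W Q"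
      and sep: "\<forall>K. maps_range W (lift_op V W K) P Q \<longleftrightarrow> frob_inner V M (mmul V K (idop V)) = 0"
      using exists_separating_triple[OF fV, of M L "idop V"] opL by (auto simp: mmul_idop_right fV)
    have "sat_par V W E P Q"
      using M1 sep opK by (simp add: sat_par_iff_maps_range[OF W E P Q] mmul_idop_right fV)
    hence "sat_par V W F P Q" using le W P Q by (simp add: le_P_def is_proj_projector)
    hence "maps_range W (lift_op V W L) P Q" using L by (simp add: sat_par_iff_maps_range[OF W F P Q])
    hence "frob_inner V M (mmul V L (idop V)) = 0" using sep by blast
    thus False using M2 opL fV by (simp add: mmul_idop_right)
  qed
  thus ?thesis unfolding cspan_eq by (intro qvs.span_minimal) auto
qed

lemma le_T_if_cspan_subset:
  assumes fV: "finite V" and E: "kraus_on V E Es" "trace_nonincreasing V E"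
    and F: "kraus_on V F Fs" "trace_nonincreasing V F"
    and TEF: "term_space V E \<subseteq> term_space V F"
    and sub: "cspan (set (map (\<lambda>K. mmul V K (term_proj V E)) Fs))
      \<subseteq> cspan (set (map (\<lambda>K. mmul V K (term_proj V E)) Es))"
  shows "le_T V E F"
  unfolding le_T_def
proof (intro allI impI)
  define T where "T = term_proj V E"
  fix W P Q assume "finite W" and P: "projector W P" and Q: "projector W Q"
    and sat: "sat_tot V W E P Q"
  show "sat_tot V W F P Q" unfolding sat_tot_iff_tot_on
  proof (intro allI impI)
    fix X assume X: "finite X" "V \<union> W \<subseteq> X"
    hence VX: "V \<subseteq> X" and WX: "W \<subseteq> X" by auto
    define A where "A = lift_op W X P"
    note iff = tot_on_ext_so_iff[OF X(1) VX _ _ is_proj_lift_projector[OF X(1) WX P]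
        is_proj_lift_projector[OF X(1) WX Q], folded A_def]
    have mapsE: "\<forall>K\<in>set Es. maps_range X (lift_op V X K) A (lift_op W X Q)"
      and defE: "mmul X (lift_op V X (defect V Es)) A = 0"
      using sat X iff[OF E] by (simp_all add: sat_tot_iff_tot_on A_def)
    have TA: "mmul X (lift_op V X T) A = A"
      using lift_op_mmul_fixed[OF X(1) VX is_proj_lift_projector[OF X(1) WX P] _ defE[unfolded A_def]]
        term_proj(2)[OF fV E] term_space_iff[OF fV E] by (simp add: A_def T_def)
    hence mapsET: "\<forall>K\<in>set (map (\<lambda>K. mmul V K T) Es). maps_range X (lift_op V X K) A (lift_op W X Q)"
      using mapsE by (simp add: maps_range_def mmul_lift_op_fixed[OF X(1) VX TA])
    have "mmul V L T \<in> cspan (set (map (\<lambda>K. mmul V K T) Es))" if "L \<in> set Fs" for L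
      using sub that qvs.span_base[of "mmul V L T" "set (map (\<lambda>K. mmul V K T) Fs)"]
      by (auto simp: cspan_eq T_def)
    hence "maps_range X (lift_op V X (mmul V L T)) A (lift_op W X Q)" if "L \<in> set Fs" for L
      using maps_range_cspan[OF mapsET] that by blast
    hence "\<forall>L\<in>set Fs. maps_range X (lift_op V X L) A (lift_op W X Q)"
      by (simp add: maps_range_def mmul_lift_op_fixed[OF X(1) VX TA])
    moreover have "mmul X (lift_op V X (defect V Fs)) A = 0"
      using TA TEF term_space_subset_iff[OF fV E F] mmul_lift_op_fixed[OF X(1) VX TA, of "defect V Fs"]
      by (simp add: T_def)
    ultimately have "tot_on X (ext_so V F) A (lift_op W X Q)" using iff[OF F] by simp
    thus "tot_on X (ext_so V F) (lift_op W X P) (lift_op W X Q)" by (simp add: A_def)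
  qed
qed

lemma term_space_subset_if_le_T:
  assumes fV: "finite V" and E: "kraus_on V E Es" "trace_nonincreasing V E"
    and F: "kraus_on V F Fs" "trace_nonincreasing V F" and le: "le_T V E F"
  shows "term_space V E \<subseteq> term_space V F"
proof -
  have T: "is_proj V (term_proj V E)" and I: "is_proj V (idop V)"
    using term_proj(1)[OF fV E] is_proj_idop[OF fV] .
  note iff = sat_tot_iff_maps_range[OF fV order_refl _ _ T I]
  have "sat_tot V V E (term_proj V E) (idop V)"
    using term_space_subset_iff[OF fV E E] E
    by (simp add: iff maps_range_def lift_op_self op_on_defect)
  hence "sat_tot V V F (term_proj V E) (idop V)" using le fV T I by (simp add: le_T_def is_proj_projector)
  thus ?thesis using iff[OF F] F by (simp add: term_space_subset_iff[OF fV E F] lift_op_self op_on_defect)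
qed

lemma cspan_subset_if_le_T:
  assumes fV: "finite V" and E: "kraus_on V E Es" "trace_nonincreasing V E"
    and F: "kraus_on V F Fs" "trace_nonincreasing V F" and le: "le_T V E F"
  defines "T \<equiv> term_proj V E"
  shows "cspan (set (map (\<lambda>K. mmul V K T) Fs)) \<subseteq> cspan (set (map (\<lambda>K. mmul V K T) Es))"
proof -
  have opT: "op_on V T" using term_proj(1)[OF fV E] by (simp add: T_def is_proj_def)
  have "mmul V L T \<in> cspan (set (map (\<lambda>K. mmul V K T) Es))" if L: "L \<in> set Fs" for L
  proof (rule ccontr)
    have "\<forall>K\<in>set (map (\<lambda>K. mmul V K T) Es). op_on V K" and "op_on V (mmul V L T)"
      using E F L opT by (auto simp: kraus_on_def)
    moreover assume "mmul V L T \<notin> cspan (set (map (\<lambda>K. mmul V K T) Es))"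
    ultimately obtain M where M1: "\<forall>K\<in>set (map (\<lambda>K. mmul V K T) Es). frob_inner V M K = 0"
      and M2: "frob_inner V M (mmul V L T) \<noteq> 0"
      using exists_separating_op[OF fV finite_set] by blast
    obtain W P Q where W: "finite W" "V \<subseteq> W" and P: "is_proj W P" and Q: "is_proj W Q"
      and sep: "\<forall>K. maps_range W (lift_op V W K) P Q \<longleftrightarrow> frob_inner V M (mmul V K T) = 0"
      and kill: "\<forall>D. mmul V D T = 0 \<longrightarrow> mmul W (lift_op V W D) P = 0"
      using exists_separating_triple[OF fV M2] by blast
    have "mmul V (defect V Es) T = 0" using term_space_subset_iff[OF fV E E] by (simp add: T_def)
    hence "sat_tot V W E P Q" using M1 sep kill by (simp add: sat_tot_iff_maps_range[OF W E P Q])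
    hence "sat_tot V W F P Q" using le W P Q by (simp add: le_T_def is_proj_projector)
    hence "maps_range W (lift_op V W L) P Q" using L by (simp add: sat_tot_iff_maps_range[OF W F P Q])
    thus False using sep M2 by blast
  qed
  thus ?thesis unfolding cspan_eq by (intro qvs.span_minimal) auto
qed

lemma DProg_kraus_on:
  assumes "E \<in> DProg V"
  obtains Es where "kraus_on V E Es" and "trace_nonincreasing V E"
  using assms by (auto simp: DProg_def completely_positive_def intro: kraus_on_clip)

lemma le_P_iff_kraus_span:
  assumes fV: "finite V" and "E \<in> DProg V" and "F \<in> DProg V"
  shows "le_P V E F \<longleftrightarrow> kraus_span V F \<subseteq> kraus_span V E"
proof -
  obtain Es Fs where E: "kraus_on V E Es" "trace_nonincreasing V E"
    and F: "kraus_on V F Fs" "trace_nonincreasing V F"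
    using DProg_kraus_on assms(2,3) by metis
  show ?thesis
    using le_P_if_cspan_subset[OF fV E F] cspan_subset_if_le_P[OF fV E F]
    by (auto simp: kraus_span_eq[OF fV E(1)] kraus_span_eq[OF fV F(1)])
qed

lemma le_T_iff_kraus_span:
  assumes fV: "finite V" and "E \<in> DProg V" and "F \<in> DProg V"
  shows "le_T V E F \<longleftrightarrow> term_space V E \<subseteq> term_space V F
    \<and> kraus_span V (F \<circ> proj_so V (term_proj V E)) \<subseteq> kraus_span V (E \<circ> proj_so V (term_proj V E))"
proof -
  obtain Es Fs where E: "kraus_on V E Es" "trace_nonincreasing V E"
    and F: "kraus_on V F Fs" "trace_nonincreasing V F"
    using DProg_kraus_on assms(2,3) by metis
  note T = term_proj(1)[OF fV E]
  show ?thesis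
    unfolding kraus_span_eq[OF fV kraus_on_comp_proj_so[OF E(1) T]]
      kraus_span_eq[OF fV kraus_on_comp_proj_so[OF F(1) T]]
    using le_T_if_cspan_subset[OF fV E F] term_space_subset_if_le_T[OF fV E F]
      cspan_subset_if_le_T[OF fV E F] by blast
qed

lemma term_proj_trace_preserving:
  assumes fV: "finite V" and E: "kraus_on V E Es" "trace_nonincreasing V E"
    and tp: "trace_preserving V E"
  shows "term_proj V E = idop V"
proof (rule proj_eqI[OF fV term_proj(1)[OF fV E] is_proj_idop[OF fV]])
  fix \<psi> assume "vec_in V \<psi>"
  moreover have "apply_op V (idop V) \<psi> = \<psi>" using \<open>vec_in V \<psi>\<close> by (rule apply_idop_vec_in[OF fV])
  ultimately show "apply_op V (term_proj V E) \<psi> = \<psi> \<longleftrightarrow> apply_op V (idop V) \<psi> = \<psi>"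
    using term_proj(2)[OF fV E] tp by (simp add: term_space_def trace_preserving_def)
qed

lemma le_T_iff_le_P_if_trace_preserving:
  assumes fV: "finite V" and "E \<in> DProg V" and "F \<in> DProg V"
    and tp: "trace_preserving V E" "trace_preserving V F"
  shows "le_T V E F \<longleftrightarrow> le_P V E F"
proof -
  obtain Es Fs where E: "kraus_on V E Es" "trace_nonincreasing V E"
    and F: "kraus_on V F Fs" "trace_nonincreasing V F"
    using DProg_kraus_on assms(2,3) by metis
  have "term_space V E = term_space V F" using tp by (simp add: term_space_def trace_preserving_def)
  moreover have "kraus_span V (G \<circ> proj_so V (idop V)) = kraus_span V G"
    if "kraus_on V G Gs" for G Gs
    using that kraus_span_eq[OF fV kraus_on_comp_proj_so[OF that is_proj_idop[OF fV]]] kraus_span_eq[OF fV that]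
    by (simp add: kraus_on_def mmul_idop_right fV cong: map_cong)
  ultimately show ?thesis
    using le_T_iff_kraus_span[OF assms(1-3)] le_P_iff_kraus_span[OF assms(1-3)]
      term_proj_trace_preserving[OF fV E tp(1)] E(1) F(1) by simp
qed

theorem theorem4p7:
  fixes V :: "nat set" and E F :: superop
  assumes "finite V" and "E \<in> DProg V" and "F \<in> DProg V"
  shows "(le_P V E F \<longleftrightarrow> kraus_span V F \<subseteq> kraus_span V E)
    \<and> (le_T V E F \<longleftrightarrow> term_space V E \<subseteq> term_space V F
          \<and> kraus_span V (F \<circ> proj_so V (term_proj V E))
              \<subseteq> kraus_span V (E \<circ> proj_so V (term_proj V E)))
    \<and> (trace_preserving V E \<and> trace_preserving V F \<longrightarrow> (le_T V E F \<longleftrightarrow> le_P V E F))"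
  using le_P_iff_kraus_span[OF assms] le_T_iff_kraus_span[OF assms]
    le_T_iff_le_P_if_trace_preserving[OF assms] by blast

end
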